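(* $\mathcal{N}_{\mathbb{M}^{\mathrm{Club}}_\kappa}=\mathcal{I}_{\mathbb{M}^{\mathrm{Club}}_\kappa}$.
   Context: $\kappa$ is an uncountable regular cardinal with $\kappa=2^{<\kappa}$. $\mathbb{M}^{\mathrm{Club}}_\kappa$ consists of pruned $<\kappa$-closed trees $p\subseteq\kappa^{<\kappa}$, ordered by inclusion, such that every $s\in p$ has an extension $t\in p$ with $\mathrm{succ}(t,p)=\{\alpha<\kappa: t^\frown\alpha\in p\}$ club in $\kappa$ (such $t$ is club-splitting; $t^\frown\alpha$ is $t$ extended by $\alpha$), and for every branch $x\in[p]$ the set $\{\alpha<\kappa: x\restriction\alpha \text{ is club-splitting}\}$ is club. For a tree-forcing $\mathbb{P}$, $\mathcal{N}_\mathbb{P}$ is the family of $\mathbb{P}$-nowhere dense sets ($X$ such that every $p$ has $q\leq p$ with $[q]\cap X=\emptyset$) and $\mathcal{I}_\mathbb{P}$ the family of sets covered by $\kappa$ many $\mathbb{P}$-nowhere dense sets. *)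

theory Defs
  imports Main "HOL-Library.Countable_Set"
begin

(* The cardinal kappa is represented by a type 'a together with a cardinal
   well-order r on UNIV :: 'a set (so kappa = |UNIV :: 'a set|, and the
   ordinals below kappa are the elements of 'a ordered by r).
   A node of kappa^{<kappa} is a partial map s :: 'a \<rightharpoonup> 'a whose domain is
   the initial segment underS r alpha (alpha = length of s).
   A branch (element of kappa^kappa) is a total function x :: 'a \<Rightarrow> 'a. *)

definition kappa_assms :: "'a rel \<Rightarrow> bool" where
  "kappa_assms r \<longleftrightarrow>
     card_order r \<and> regularCard r \<and> \<not> countable (UNIV :: 'a set) \<and>
     ordIso2 (BNF_Cardinal_Order_Relation.card_of
                {s :: 'a \<Rightarrow> bool option. \<exists>\<alpha>. dom s = underS r \<alpha>}) r"

definition lt :: "'a rel \<Rightarrow> 'a \<Rightarrow> 'a \<Rightarrow> bool" where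
  "lt r \<alpha> \<beta> \<longleftrightarrow> (\<alpha>, \<beta>) \<in> r \<and> \<alpha> \<noteq> \<beta>"

definition Seqs :: "'a rel \<Rightarrow> ('a \<Rightarrow> 'a option) set" where
  "Seqs r = {s. \<exists>\<alpha>. dom s = underS r \<alpha>}"

definition restr :: "'a rel \<Rightarrow> ('a \<Rightarrow> 'a) \<Rightarrow> 'a \<Rightarrow> ('a \<Rightarrow> 'a option)" where
  "restr r x \<alpha> = (Some \<circ> x) |` underS r \<alpha>"

definition unbounded :: "'a rel \<Rightarrow> 'a set \<Rightarrow> bool" where
  "unbounded r C \<longleftrightarrow> (\<forall>\<alpha>. \<exists>\<beta>\<in>C. lt r \<alpha> \<beta>)"

definition closed_set :: "'a rel \<Rightarrow> 'a set \<Rightarrow> bool" where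
  "closed_set r C \<longleftrightarrow>
     (\<forall>\<alpha>. (\<exists>\<beta>. lt r \<beta> \<alpha>) \<and> (\<forall>\<beta>. lt r \<beta> \<alpha> \<longrightarrow> (\<exists>\<gamma>\<in>C. lt r \<beta> \<gamma> \<and> lt r \<gamma> \<alpha>))
          \<longrightarrow> \<alpha> \<in> C)"

definition club :: "'a rel \<Rightarrow> 'a set \<Rightarrow> bool" where
  "club r C \<longleftrightarrow> closed_set r C \<and> unbounded r C"

definition is_limit :: "'a rel \<Rightarrow> 'a \<Rightarrow> bool" where
  "is_limit r \<delta> \<longleftrightarrow> (\<exists>\<beta>. lt r \<beta> \<delta>) \<and> (\<forall>\<beta>. lt r \<beta> \<delta> \<longrightarrow> (\<exists>\<gamma>. lt r \<beta> \<gamma> \<and> lt r \<gamma> \<delta>))"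

(* succ(t,p) = {beta. t^beta \<in> p}, where t^beta = t(len t := beta) *)
definition succ_set :: "'a rel \<Rightarrow> ('a \<Rightarrow> 'a option) \<Rightarrow> ('a \<Rightarrow> 'a option) set \<Rightarrow> 'a set" where
  "succ_set r t p = {\<beta>. \<exists>\<delta>. dom t = underS r \<delta> \<and> t(\<delta> \<mapsto> \<beta>) \<in> p}"

definition club_splitting :: "'a rel \<Rightarrow> ('a \<Rightarrow> 'a option) set \<Rightarrow> ('a \<Rightarrow> 'a option) \<Rightarrow> bool" where
  "club_splitting r p t \<longleftrightarrow> club r (succ_set r t p)"

definition branches :: "'a rel \<Rightarrow> ('a \<Rightarrow> 'a option) set \<Rightarrow> ('a \<Rightarrow> 'a) set" where
  "branches r p = {x. \<forall>\<alpha>. restr r x \<alpha> \<in> p}"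

definition is_tree :: "'a rel \<Rightarrow> ('a \<Rightarrow> 'a option) set \<Rightarrow> bool" where
  "is_tree r p \<longleftrightarrow> p \<noteq> {} \<and> p \<subseteq> Seqs r \<and>
     (\<forall>t\<in>p. \<forall>s\<in>Seqs r. s \<subseteq>\<^sub>m t \<longrightarrow> s \<in> p)"

definition pruned :: "'a rel \<Rightarrow> ('a \<Rightarrow> 'a option) set \<Rightarrow> bool" where
  "pruned r p \<longleftrightarrow> (\<forall>s\<in>p. \<exists>t\<in>p. s \<subseteq>\<^sub>m t \<and> s \<noteq> t)"

definition lt_kappa_closed :: "'a rel \<Rightarrow> ('a \<Rightarrow> 'a option) set \<Rightarrow> bool" where
  "lt_kappa_closed r p \<longleftrightarrow>
     (\<forall>s \<delta>. dom s = underS r \<delta> \<and> is_limit r \<delta> \<and>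
        (\<forall>\<alpha>. lt r \<alpha> \<delta> \<longrightarrow> s |` underS r \<alpha> \<in> p) \<longrightarrow> s \<in> p)"

definition MClub :: "'a rel \<Rightarrow> ('a \<Rightarrow> 'a option) set set" where
  "MClub r = {p. is_tree r p \<and> pruned r p \<and> lt_kappa_closed r p \<and>
      (\<forall>s\<in>p. \<exists>t\<in>p. s \<subseteq>\<^sub>m t \<and> club_splitting r p t) \<and>
      (\<forall>x\<in>branches r p. club r {\<alpha>. club_splitting r p (restr r x \<alpha>)})}"

definition nowhere_dense :: "'a rel \<Rightarrow> ('a \<Rightarrow> 'a option) set set \<Rightarrow> ('a \<Rightarrow> 'a) set set" where
  "nowhere_dense r P = {X. \<forall>p\<in>P. \<exists>q\<in>P. q \<subseteq> p \<and> branches r q \<inter> X = {}}"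

definition ideal_I :: "'a rel \<Rightarrow> ('a \<Rightarrow> 'a option) set set \<Rightarrow> ('a \<Rightarrow> 'a) set set" where
  "ideal_I r P = {X. \<exists>F :: 'a \<Rightarrow> ('a \<Rightarrow> 'a) set.
                   (\<forall>\<alpha>. F \<alpha> \<in> nowhere_dense r P) \<and> X \<subseteq> (\<Union>\<alpha>. F \<alpha>)}"

end

theory Submission
  imports Defs
begin

(* A fusion argument.  Given a condition p and nowhere dense sets F j (j < kappa), we build
   q \<le> p node by node: every node t of q carries a condition C t \<le> p containing t and a set
   H t of indices already handled.  Whenever the construction passes a club-splitting node u,
   the next unhandled index j is handled by shrinking C u to a condition whose branches miss F j;
   at limits we intersect.  To keep these intersections inside the forcing we work with normal
   conditions, in which every node is either club-splitting or has exactly one successor; small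
   decreasing chains of normal conditions have normal intersections because the intersection of
   fewer than kappa clubs is a club.  Along a branch of q the club-splitting levels form a club,
   hence have size kappa, and since H grows by one index at each of them every index is
   eventually handled, so the branch misses every F j. *)

unbundle cardinal_syntax

locale kappa =
  fixes r :: "'a rel"
  assumes kappa: "kappa_assms r"
begin

lemma card_order_r: "card_order r"
  using kappa unfolding kappa_assms_def by auto

lemma regular_r: "regularCard r"
  using kappa unfolding kappa_assms_def by auto

lemma uncountable: "\<not> countable (UNIV :: 'a set)"
  using kappa unfolding kappa_assms_def by auto

lemma Field_r: "Field r = UNIV"
  using card_order_r card_order_on_Card_order by blast

lemma Well_order_r: "Well_order r"
  using card_order_r Field_r unfolding card_order_on_def by auto

lemma r_refl [simp]: "(a, a) \<in> r"
  using Well_order_r Field_r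
  unfolding well_order_on_def linear_order_on_def partial_order_on_def preorder_on_def refl_on_def
  by auto

lemma r_trans: "(a, b) \<in> r \<Longrightarrow> (b, c) \<in> r \<Longrightarrow> (a, c) \<in> r"
  using Well_order_r
  unfolding well_order_on_def linear_order_on_def partial_order_on_def preorder_on_def trans_def
  by blast

lemma r_antisym: "(a, b) \<in> r \<Longrightarrow> (b, a) \<in> r \<Longrightarrow> a = b"
  using Well_order_r
  unfolding well_order_on_def linear_order_on_def partial_order_on_def antisym_def by blast

lemma r_total: "(a, b) \<in> r \<or> (b, a) \<in> r"
  using Well_order_r Field_r unfolding well_order_on_def linear_order_on_def total_on_def
  by (cases "a = b") auto

abbreviation less (infix "\<prec>" 50) where "a \<prec> b \<equiv> lt r a b"

lemma lt_irrefl [simp]: "\<not> a \<prec> a"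
  by (simp add: lt_def)

lemma lt_trans: "a \<prec> b \<Longrightarrow> b \<prec> c \<Longrightarrow> a \<prec> c"
  unfolding lt_def by (metis r_trans r_antisym)

lemma lt_r_trans: "a \<prec> b \<Longrightarrow> (b, c) \<in> r \<Longrightarrow> a \<prec> c"
  unfolding lt_def by (metis r_trans r_antisym)

lemma r_lt_trans: "(a, b) \<in> r \<Longrightarrow> b \<prec> c \<Longrightarrow> a \<prec> c"
  unfolding lt_def by (metis r_trans r_antisym)

lemma not_lt_iff: "\<not> a \<prec> b \<longleftrightarrow> (b, a) \<in> r"
  unfolding lt_def using r_total[of a b] r_antisym[of a b] by auto

lemma lt_trichotomy: "a \<prec> b \<or> a = b \<or> b \<prec> a"
  using not_lt_iff unfolding lt_def by metis

lemma lt_imp_r: "a \<prec> b \<Longrightarrow> (a, b) \<in> r"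
  by (simp add: lt_def)

lemma lt_asym: "a \<prec> b \<Longrightarrow> \<not> b \<prec> a"
  using lt_trans lt_irrefl by metis

lemma underS_conv: "underS r a = {b. b \<prec> a}"
  unfolding underS_def lt_def by auto

lemma wf_lt: "wf {(a, b). a \<prec> b}"
proof -
  have "{(a, b). a \<prec> b} = r - Id"
    unfolding lt_def by auto
  then show ?thesis
    using Well_order_r unfolding well_order_on_def by auto
qed

lemma lt_induct: "(\<And>a. (\<And>b. b \<prec> a \<Longrightarrow> P b) \<Longrightarrow> P a) \<Longrightarrow> P a"
  using wf_induct[OF wf_lt, of P] by auto

lemma exists_least: "P a \<Longrightarrow> \<exists>m. P m \<and> (\<forall>b. P b \<longrightarrow> (m, b) \<in> r)"
  using wf_eq_minimal[THEN iffD1, OF wf_lt, rule_format, of a "{x. P x}"] not_lt_iff by auto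

lemma exists_greater: "\<exists>b. a \<prec> b"
proof -
  have "\<not> finite (UNIV :: 'a set)"
    using uncountable countable_finite by blast
  then have "\<exists>b \<in> Field r. a \<noteq> b \<and> (a, b) \<in> r"
    using infinite_Card_order_limit[of r a] card_order_r Field_r card_order_on_Card_order by force
  then show ?thesis
    unfolding lt_def by auto
qed

lemma exists_greater2: "\<exists>c. a \<prec> c \<and> b \<prec> c"
proof (cases "a \<prec> b")
  case True
  then show ?thesis
    using exists_greater[of b] lt_trans by blast
next
  case False
  then show ?thesis
    using exists_greater[of a] not_lt_iff r_lt_trans by blast
qed

lemma underS_inj: "underS r a = underS r b \<Longrightarrow> a = b"
  using lt_trichotomy[of a b] unfolding underS_conv by (metis lt_irrefl mem_Collect_eq)

lemma underS_mono: "(a, b) \<in> r \<Longrightarrow> underS r a \<subseteq> underS r b"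
  unfolding underS_conv using lt_r_trans by blast

lemma card_underS_less: "|underS r a| <o r"
  using card_of_underS[of r a] card_order_r Field_r card_order_on_Card_order by blast

lemma small_imp_bounded:
  assumes "|A| <o r"
  shows "\<exists>c. \<forall>b\<in>A. b \<prec> c"
proof -
  have "\<not> cofinal A r"
    using assms regular_r Field_r not_ordLess_ordIso unfolding regularCard_def by blast
  then obtain a where a: "\<forall>b\<in>A. \<not> (a \<noteq> b \<and> (a, b) \<in> r)"
    unfolding cofinal_def Field_r by auto
  obtain c where "a \<prec> c"
    using exists_greater by blast
  then have "b \<prec> c" if "b \<in> A" for b
    using a that r_total[of a b] r_lt_trans by (cases "a = b") auto
  then show ?thesis
    by blast
qed

lemma unbounded_not_small:
  assumes "unbounded r A"
  shows "\<not> |A| <o r"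
proof
  assume "|A| <o r"
  then obtain c where "\<forall>b\<in>A. b \<prec> c"
    using small_imp_bounded by blast
  moreover obtain b where "b \<in> A" "c \<prec> b"
    using assms unfolding unbounded_def by blast
  ultimately show False
    using lt_asym by blast
qed

lemma countable_small:
  assumes "countable A"
  shows "|A| <o r"
proof -
  have "|A| \<le>o |UNIV :: nat set|"
    using assms unfolding countable_def card_of_ordLeq[symmetric] by blast
  moreover have "|UNIV :: nat set| <o |UNIV :: 'a set|"
    using uncountable not_ordLeq_iff_ordLess[OF card_of_Well_order card_of_Well_order]
    unfolding countable_def card_of_ordLeq[symmetric] by blast
  moreover have "|UNIV :: 'a set| =o r"
    using card_of_Field_ordIso[of r] card_order_r card_order_on_Card_order Field_r by fastforce
  ultimately show ?thesis
    using ordLeq_ordLess_trans ordLess_ordIso_trans by blast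
qed

lemma small_image: "|A| <o r \<Longrightarrow> |f ` A| <o r"
  using card_of_image[of f A] by (rule ordLeq_ordLess_trans)

lemma small_insert: "|A :: 'a set| <o r \<Longrightarrow> |insert a A| <o r"
proof -
  assume "|A| <o r"
  then obtain c where c: "\<forall>b\<in>A. b \<prec> c"
    using small_imp_bounded by blast
  obtain d where "a \<prec> d" "c \<prec> d"
    using exists_greater2 by blast
  then have "insert a A \<subseteq> underS r d"
    using c lt_trans unfolding underS_conv by blast
  then show ?thesis
    by (rule ordLeq_ordLess_trans[OF card_of_mono1 card_underS_less])
qed

definition ozero :: 'a where
  "ozero = (SOME z. \<forall>b. (z, b) \<in> r)"

lemma ozero_least: "(ozero, b) \<in> r"
proof -
  obtain m where "\<forall>b. (m, b) \<in> r"
    using exists_least[where P = "\<lambda>x. True"] by blast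
  then have "\<forall>b. (ozero, b) \<in> r"
    unfolding ozero_def by (rule someI)
  then show ?thesis
    by blast
qed

lemma underS_ozero: "underS r ozero = {}"
  unfolding underS_conv using ozero_least not_lt_iff by blast

lemma r_ozero_imp_eq: "(a, ozero) \<in> r \<Longrightarrow> a = ozero"
  using ozero_least r_antisym by blast

definition osucc :: "'a \<Rightarrow> 'a" where
  "osucc a = (SOME b. a \<prec> b \<and> (\<forall>c. a \<prec> c \<longrightarrow> (b, c) \<in> r))"

lemma osucc_prop: "a \<prec> osucc a \<and> (\<forall>c. a \<prec> c \<longrightarrow> (osucc a, c) \<in> r)"
proof -
  obtain b where "a \<prec> b"
    using exists_greater by blast
  then obtain m where "a \<prec> m \<and> (\<forall>c. a \<prec> c \<longrightarrow> (m, c) \<in> r)"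
    using exists_least[of "\<lambda>x. a \<prec> x"] by blast
  then show ?thesis
    unfolding osucc_def by (rule someI)
qed

lemma lt_osucc: "a \<prec> osucc a"
  using osucc_prop by blast

lemma osucc_least: "a \<prec> c \<Longrightarrow> (osucc a, c) \<in> r"
  using osucc_prop by blast

lemma lt_osucc_iff: "b \<prec> osucc a \<longleftrightarrow> (b, a) \<in> r"
  using osucc_least not_lt_iff lt_osucc r_lt_trans by blast

lemma underS_osucc: "underS r (osucc a) = insert a (underS r a)"
  unfolding underS_conv lt_osucc_iff by (auto simp add: lt_def)

lemma osucc_inj: "osucc a = osucc b \<Longrightarrow> a = b"
  using lt_osucc_iff r_antisym by (metis r_refl)

lemma osucc_neq_ozero: "osucc a \<noteq> ozero"
  using lt_osucc[of a] underS_ozero unfolding underS_conv by auto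

lemma limit_neq_ozero: "is_limit r d \<Longrightarrow> d \<noteq> ozero"
  using underS_ozero unfolding is_limit_def underS_conv by auto

lemma limit_neq_osucc: "is_limit r d \<Longrightarrow> d \<noteq> osucc g"
  using lt_osucc lt_osucc_iff not_lt_iff unfolding is_limit_def by blast

lemma ordinal_cases:
  obtains (zero) "d = ozero" | (succ) g where "d = osucc g" | (limit) "is_limit r d"
proof -
  have "is_limit r d" if "d \<noteq> ozero" and "\<forall>g. d \<noteq> osucc g"
  proof -
    have "\<exists>b. b \<prec> d"
      using that(1) ozero_least r_antisym not_lt_iff by blast
    moreover have "\<exists>c. b \<prec> c \<and> c \<prec> d" if "b \<prec> d" for b
      using that osucc_least[of b d] \<open>\<forall>g. d \<noteq> osucc g\<close> lt_osucc by (auto simp: lt_def)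
    ultimately show ?thesis
      unfolding is_limit_def by blast
  qed
  then show ?thesis
    using that by metis
qed

definition least_notin :: "'a set \<Rightarrow> 'a" where
  "least_notin H = (SOME m. m \<notin> H \<and> (\<forall>b. b \<notin> H \<longrightarrow> (m, b) \<in> r))"

lemma least_notin:
  assumes "a \<notin> H"
  shows "least_notin H \<notin> H" and "b \<notin> H \<Longrightarrow> (least_notin H, b) \<in> r"
proof -
  have "\<exists>m. m \<notin> H \<and> (\<forall>b. b \<notin> H \<longrightarrow> (m, b) \<in> r)"
    using exists_least[where P = "\<lambda>b. b \<notin> H"] assms by blast
  then have "least_notin H \<notin> H \<and> (\<forall>b. b \<notin> H \<longrightarrow> (least_notin H, b) \<in> r)"
    unfolding least_notin_def by (rule someI_ex)
  then show "least_notin H \<notin> H" and "b \<notin> H \<Longrightarrow> (least_notin H, b) \<in> r"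
    by blast+
qed

lemma insert_least_notin:
  assumes H: "H \<subseteq> underS r g" and down: "\<forall>i\<in>H. \<forall>j. j \<prec> i \<longrightarrow> j \<in> H"
  shows "insert (least_notin H) H \<subseteq> underS r (osucc g)"
    and "\<forall>i\<in>insert (least_notin H) H. \<forall>j. j \<prec> i \<longrightarrow> j \<in> insert (least_notin H) H"
proof -
  have "g \<notin> H"
    using H unfolding underS_conv by auto
  then have "least_notin H \<notin> H" and least: "\<And>b. b \<notin> H \<Longrightarrow> (least_notin H, b) \<in> r"
    using least_notin by blast+
  show "insert (least_notin H) H \<subseteq> underS r (osucc g)"
    using H least[OF \<open>g \<notin> H\<close>] lt_osucc_iff lt_imp_r unfolding underS_conv by auto
  show "\<forall>i\<in>insert (least_notin H) H. \<forall>j. j \<prec> i \<longrightarrow> j \<in> insert (least_notin H) H"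
    using down least not_lt_iff by blast
qed

subsection \<open>Clubs\<close>

lemma closed_set_Inter:
  assumes "\<forall>C\<in>\<F>. closed_set r C"
  shows "closed_set r (\<Inter>\<F>)"
  unfolding closed_set_def
proof (intro allI impI InterI)
  fix a C
  assume a: "(\<exists>b. b \<prec> a) \<and> (\<forall>b. b \<prec> a \<longrightarrow> (\<exists>c\<in>\<Inter>\<F>. b \<prec> c \<and> c \<prec> a))"
    and C: "C \<in> \<F>"
  have "closed_set r C"
    using assms C by blast
  moreover have "(\<exists>b. b \<prec> a) \<and> (\<forall>b. b \<prec> a \<longrightarrow> (\<exists>c\<in>C. b \<prec> c \<and> c \<prec> a))"
    using a C by blast
  ultimately show "a \<in> C"
    unfolding closed_set_def by blast
qed

lemma omega_iteration_sup:
  assumes "\<And>b. b \<prec> B b"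
  shows "\<exists>g. (\<forall>n. (B ^^ n) a \<prec> g) \<and> (\<forall>b. b \<prec> g \<longrightarrow> (\<exists>n. b \<prec> (B ^^ n) a))"
proof -
  define s where "s n = (B ^^ n) a" for n
  have "|range s| <o r"
    by (rule countable_small) simp
  then obtain u where "\<forall>n. s n \<prec> u"
    using small_imp_bounded by blast
  then obtain g where g: "\<forall>n. s n \<prec> g" and g_least: "\<And>u. \<forall>n. s n \<prec> u \<Longrightarrow> (g, u) \<in> r"
    using exists_least[where P = "\<lambda>u. \<forall>n. s n \<prec> u"] by blast
  have "\<exists>n. b \<prec> s n" if "b \<prec> g" for b
  proof (rule ccontr)
    assume "\<not> (\<exists>n. b \<prec> s n)"
    then have "(s (Suc n), b) \<in> r" for n
      using not_lt_iff by blast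
    then have "s n \<prec> b" for n
      using assms[of "s n"] lt_r_trans unfolding s_def by simp
    then show False
      using g_least that not_lt_iff by blast
  qed
  then show ?thesis
    using g unfolding s_def by blast
qed

lemma small_clubs_next_bound:
  assumes small: "|\<F>| <o r" and clubs: "\<forall>C\<in>\<F>. club r C"
  obtains B where "\<And>b. b \<prec> B b" and "\<And>b C. C \<in> \<F> \<Longrightarrow> \<exists>d\<in>C. b \<prec> d \<and> d \<prec> B b"
proof -
  have "\<exists>c. b \<prec> c \<and> (\<forall>C\<in>\<F>. \<exists>d\<in>C. b \<prec> d \<and> d \<prec> c)" for b
  proof -
    have "\<forall>C\<in>\<F>. \<exists>d. d \<in> C \<and> b \<prec> d"
      using clubs unfolding club_def unbounded_def by blast
    then obtain nxt where nxt: "\<forall>C\<in>\<F>. nxt C \<in> C \<and> b \<prec> nxt C"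
      by (rule bchoice[THEN exE]) blast
    have "|insert b (nxt ` \<F>)| <o r"
      using small_insert small_image small by blast
    then obtain c where "\<forall>d\<in>insert b (nxt ` \<F>). d \<prec> c"
      using small_imp_bounded by blast
    then show ?thesis
      using nxt by blast
  qed
  then obtain B where "\<forall>b. b \<prec> B b \<and> (\<forall>C\<in>\<F>. \<exists>d\<in>C. b \<prec> d \<and> d \<prec> B b)"
    using choice[of "\<lambda>b c. b \<prec> c \<and> (\<forall>C\<in>\<F>. \<exists>d\<in>C. b \<prec> d \<and> d \<prec> c)"] by blast
  then show ?thesis
    using that by blast
qed

text \<open>The common point above a is the supremum of an omega-sequence between any two consecutive
  terms of which every club has a point; regularity keeps it below kappa.\<close>

lemma club_Inter:
  assumes small: "|\<F>| <o r" and clubs: "\<forall>C\<in>\<F>. club r C"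
  shows "club r (\<Inter>\<F>)"
proof -
  obtain B where B_gt: "\<And>b. b \<prec> B b" and B: "\<And>b C. C \<in> \<F> \<Longrightarrow> \<exists>d\<in>C. b \<prec> d \<and> d \<prec> B b"
    using small_clubs_next_bound[OF assms] by blast
  have "\<exists>g\<in>\<Inter>\<F>. a \<prec> g" for a
  proof -
    obtain g where g: "\<forall>n. (B ^^ n) a \<prec> g" and sup: "\<forall>b. b \<prec> g \<longrightarrow> (\<exists>n. b \<prec> (B ^^ n) a)"
      using omega_iteration_sup[OF B_gt] by blast
    have "g \<in> C" if C: "C \<in> \<F>" for C
    proof -
      have "\<exists>d\<in>C. b \<prec> d \<and> d \<prec> g" if "b \<prec> g" for b
      proof -
        obtain n where "b \<prec> (B ^^ n) a"
          using sup \<open>b \<prec> g\<close> by blast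
        moreover obtain d where "d \<in> C" "(B ^^ n) a \<prec> d" "d \<prec> (B ^^ Suc n) a"
          using B[OF C] by fastforce
        ultimately show ?thesis
          using g lt_trans by blast
      qed
      then show ?thesis
        using clubs C g unfolding club_def closed_set_def by blast
    qed
    moreover have "a \<prec> g"
      using g[rule_format, of 0] by simp
    ultimately show ?thesis
      by blast
  qed
  moreover have "closed_set r (\<Inter>\<F>)"
    using clubs closed_set_Inter unfolding club_def by blast
  ultimately show ?thesis
    unfolding club_def unbounded_def by blast
qed

lemma club_Int: "club r A \<Longrightarrow> club r B \<Longrightarrow> club r (A \<inter> B)"
  using club_Inter[of "{A, B}"] countable_small[of "{A, B}"] by simp

lemma club_atLeast: "club r {b. (a, b) \<in> r}"
proof -
  have "c \<in> {b. (a, b) \<in> r}" if "b \<prec> c" and "\<exists>d\<in>{b. (a, b) \<in> r}. b \<prec> d \<and> d \<prec> c" for b c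
    using that r_lt_trans not_lt_iff lt_asym by blast
  moreover have "\<exists>d\<in>{b. (a, b) \<in> r}. c \<prec> d" for c
    using exists_greater2[of a c] lt_imp_r by blast
  ultimately show ?thesis
    unfolding club_def closed_set_def unbounded_def by blast
qed

lemma club_exists_greater: "club r C \<Longrightarrow> \<exists>b\<in>C. a \<prec> b"
  unfolding club_def unbounded_def by blast

lemma club_not_subset_singleton: "club r C \<Longrightarrow> \<not> C \<subseteq> {b}"
  using club_exists_greater[of C b] by auto

subsection \<open>Nodes of kappa to the less than kappa\<close>

definition len :: "('a \<Rightarrow> 'a option) \<Rightarrow> 'a" where
  "len t = (THE d. dom t = underS r d)"

definition trunc :: "('a \<Rightarrow> 'a option) \<Rightarrow> 'a \<Rightarrow> ('a \<Rightarrow> 'a option)" where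
  "trunc t a = t |` underS r a"

definition extend :: "('a \<Rightarrow> 'a option) \<Rightarrow> 'a \<Rightarrow> ('a \<Rightarrow> 'a option)" where
  "extend t b = t(len t \<mapsto> b)"

lemma len_eqI: "dom t = underS r d \<Longrightarrow> len t = d"
  unfolding len_def using underS_inj by (intro the_equality) auto

lemma SeqsI: "dom t = underS r d \<Longrightarrow> t \<in> Seqs r"
  unfolding Seqs_def by blast

lemma dom_Seqs: "t \<in> Seqs r \<Longrightarrow> dom t = underS r (len t)"
  unfolding Seqs_def using len_eqI by auto

lemma dom_trunc:
  assumes "t \<in> Seqs r" and "(a, len t) \<in> r"
  shows "dom (trunc t a) = underS r a"
  using dom_Seqs[OF assms(1)] underS_mono[OF assms(2)] unfolding trunc_def dom_restrict by blast

lemma trunc_Seqs: "t \<in> Seqs r \<Longrightarrow> (a, len t) \<in> r \<Longrightarrow> trunc t a \<in> Seqs r"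
  using dom_trunc SeqsI by blast

lemma len_trunc: "t \<in> Seqs r \<Longrightarrow> (a, len t) \<in> r \<Longrightarrow> len (trunc t a) = a"
  using dom_trunc len_eqI by blast

lemma trunc_trunc: "(a, b) \<in> r \<Longrightarrow> trunc (trunc t b) a = trunc t a"
  unfolding trunc_def using underS_mono by (auto simp: restrict_map_def fun_eq_iff)

lemma trunc_len:
  assumes "t \<in> Seqs r"
  shows "trunc t (len t) = t"
proof
  fix z
  show "trunc t (len t) z = t z"
    using dom_Seqs[OF assms] unfolding trunc_def restrict_map_def by (metis domIff)
qed

lemma trunc_map_le: "trunc t a \<subseteq>\<^sub>m t"
  unfolding trunc_def map_le_def by auto

lemma trunc_apply: "b \<prec> a \<Longrightarrow> trunc t a b = t b"
  unfolding trunc_def underS_conv by simp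

lemma map_le_Seqs_iff:
  assumes s: "s \<in> Seqs r" and t: "t \<in> Seqs r"
  shows "s \<subseteq>\<^sub>m t \<longleftrightarrow> (len s, len t) \<in> r \<and> s = trunc t (len s)"
proof
  assume le: "s \<subseteq>\<^sub>m t"
  have "underS r (len s) \<subseteq> underS r (len t)"
    using map_le_implies_dom_le[OF le] dom_Seqs[OF s] dom_Seqs[OF t] by simp
  then have "(len s, len t) \<in> r"
    using not_lt_iff[of "len t" "len s"] unfolding underS_conv by auto
  moreover have "s = trunc t (len s)"
    using le dom_Seqs[OF s] unfolding trunc_def map_le_def
    by (auto simp: restrict_map_def fun_eq_iff domIff)
  ultimately show "(len s, len t) \<in> r \<and> s = trunc t (len s)"
    by blast
next
  assume "(len s, len t) \<in> r \<and> s = trunc t (len s)"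
  then show "s \<subseteq>\<^sub>m t"
    using trunc_map_le by metis
qed

lemma map_le_imp_len: "s \<in> Seqs r \<Longrightarrow> t \<in> Seqs r \<Longrightarrow> s \<subseteq>\<^sub>m t \<Longrightarrow> (len s, len t) \<in> r"
  using map_le_Seqs_iff by blast

lemma map_le_imp_trunc: "s \<in> Seqs r \<Longrightarrow> t \<in> Seqs r \<Longrightarrow> s \<subseteq>\<^sub>m t \<Longrightarrow> s = trunc t (len s)"
  using map_le_Seqs_iff by blast

lemma map_le_len_eq: "s \<in> Seqs r \<Longrightarrow> t \<in> Seqs r \<Longrightarrow> s \<subseteq>\<^sub>m t \<Longrightarrow> len s = len t \<Longrightarrow> s = t"
  using map_le_imp_trunc trunc_len by metis

lemma map_le_neq_imp_lt:
  "s \<in> Seqs r \<Longrightarrow> t \<in> Seqs r \<Longrightarrow> s \<subseteq>\<^sub>m t \<Longrightarrow> s \<noteq> t \<Longrightarrow> len s \<prec> len t"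
  using map_le_imp_len map_le_len_eq by (simp add: lt_def) blast

lemma trunc_mono: "(a, b) \<in> r \<Longrightarrow> trunc t a \<subseteq>\<^sub>m trunc t b"
  using trunc_trunc trunc_map_le by metis

lemma Seqs_map_le_comparable:
  assumes s: "s \<in> Seqs r" and t: "t \<in> Seqs r" and u: "u \<in> Seqs r"
    and "s \<subseteq>\<^sub>m u" and "t \<subseteq>\<^sub>m u"
  shows "s \<subseteq>\<^sub>m t \<or> t \<subseteq>\<^sub>m s"
proof -
  have "s = trunc u (len s)" and "t = trunc u (len t)"
    using map_le_imp_trunc assms by blast+
  then show ?thesis
    using r_total[of "len s" "len t"] trunc_mono by metis
qed

lemma dom_extend: "t \<in> Seqs r \<Longrightarrow> dom (extend t b) = underS r (osucc (len t))"
  unfolding extend_def using dom_Seqs underS_osucc by simp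

lemma extend_Seqs: "t \<in> Seqs r \<Longrightarrow> extend t b \<in> Seqs r"
  using dom_extend SeqsI by blast

lemma len_extend: "t \<in> Seqs r \<Longrightarrow> len (extend t b) = osucc (len t)"
  using dom_extend len_eqI by blast

lemma extend_below: "a \<prec> len t \<Longrightarrow> extend t b a = t a"
  unfolding extend_def by auto

lemma extend_at_len: "extend t b (len t) = Some b"
  unfolding extend_def by simp

lemma trunc_extend:
  assumes "t \<in> Seqs r"
  shows "trunc (extend t b) (len t) = t"
proof
  fix z
  show "trunc (extend t b) (len t) z = t z"
    using dom_Seqs[OF assms] unfolding trunc_def extend_def underS_conv
    by (cases "z \<prec> len t") (auto simp: domIff)
qed

lemma trunc_extend_below: "t \<in> Seqs r \<Longrightarrow> (a, len t) \<in> r \<Longrightarrow> trunc (extend t b) a = trunc t a"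
  using trunc_trunc[of a "len t" "extend t b"] trunc_extend by simp

lemma map_le_extend: "t \<in> Seqs r \<Longrightarrow> t \<subseteq>\<^sub>m extend t b"
  using trunc_extend trunc_map_le by metis

lemma extend_neq:
  assumes "t \<in> Seqs r"
  shows "extend t b \<noteq> t"
proof
  assume "extend t b = t"
  then have "len t \<in> dom t"
    using extend_at_len[of t b] by (metis domI)
  then show False
    using dom_Seqs[OF assms] unfolding underS_conv by simp
qed

lemma extend_inj: "extend t b = extend t c \<Longrightarrow> b = c"
  using extend_at_len by (metis option.inject)

lemma succ_set_conv: "t \<in> Seqs r \<Longrightarrow> succ_set r t p = {b. extend t b \<in> p}"
  unfolding succ_set_def extend_def using dom_Seqs underS_inj by metis

lemma trunc_osucc:
  assumes t: "t \<in> Seqs r" and a: "a \<prec> len t"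
  shows "trunc t (osucc a) = extend (trunc t a) (the (t a))" and "t a \<noteq> None"
proof -
  have "a \<in> dom t"
    using dom_Seqs[OF t] a unfolding underS_conv by simp
  then show "t a \<noteq> None"
    by blast
  have "len (trunc t a) = a"
    using len_trunc t lt_imp_r[OF a] by blast
  then show "trunc t (osucc a) = extend (trunc t a) (the (t a))"
    using \<open>t a \<noteq> None\<close> unfolding trunc_def extend_def underS_osucc
    by (auto simp: restrict_map_def fun_eq_iff)
qed

lemma dom_restr: "dom (restr r x a) = underS r a"
  unfolding restr_def by auto

lemma restr_Seqs: "restr r x a \<in> Seqs r"
  using dom_restr SeqsI by blast

lemma len_restr: "len (restr r x a) = a"
  using dom_restr len_eqI by blast

lemma trunc_restr: "(a, b) \<in> r \<Longrightarrow> trunc (restr r x b) a = restr r x a"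
  unfolding trunc_def restr_def using underS_mono by (auto simp: restrict_map_def fun_eq_iff)

lemma restr_map_le: "(a, b) \<in> r \<Longrightarrow> restr r x a \<subseteq>\<^sub>m restr r x b"
  using trunc_restr trunc_map_le by metis

lemma restr_osucc: "restr r x (osucc a) = extend (restr r x a) (x a)"
proof
  fix z
  show "restr r x (osucc a) z = extend (restr r x a) (x a) z"
    unfolding extend_def len_restr unfolding restr_def underS_osucc
    by (auto simp: restrict_map_def underS_conv)
qed

lemma restr_ozero: "restr r x ozero = Map.empty"
  using dom_restr[of x ozero] underS_ozero by simp

lemma branches_restr: "x \<in> branches r p \<Longrightarrow> restr r x a \<in> p"
  unfolding branches_def by blast

lemma branches_mono: "q \<subseteq> p \<Longrightarrow> branches r q \<subseteq> branches r p"
  unfolding branches_def by blast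

lemma tree_Seqs: "is_tree r p \<Longrightarrow> t \<in> p \<Longrightarrow> t \<in> Seqs r"
  unfolding is_tree_def by blast

lemma tree_map_le: "is_tree r p \<Longrightarrow> t \<in> p \<Longrightarrow> s \<in> Seqs r \<Longrightarrow> s \<subseteq>\<^sub>m t \<Longrightarrow> s \<in> p"
  unfolding is_tree_def by blast

lemma tree_trunc: "is_tree r p \<Longrightarrow> t \<in> p \<Longrightarrow> (a, len t) \<in> r \<Longrightarrow> trunc t a \<in> p"
  unfolding is_tree_def using trunc_Seqs trunc_map_le by blast

lemma empty_Seqs: "Map.empty \<in> Seqs r"
  using underS_ozero SeqsI[of Map.empty ozero] by simp

lemma len_empty: "len Map.empty = ozero"
  using underS_ozero len_eqI[of Map.empty ozero] by simp

lemma len_ozero_imp_empty: "t \<in> Seqs r \<Longrightarrow> len t = ozero \<Longrightarrow> t = Map.empty"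
  using dom_Seqs underS_ozero by fastforce

lemma tree_empty: "is_tree r p \<Longrightarrow> Map.empty \<in> p"
  unfolding is_tree_def using empty_Seqs by fastforce

lemma tree_extend_exists:
  assumes T: "is_tree r p" and P: "pruned r p" and t: "t \<in> p"
  shows "\<exists>b. extend t b \<in> p"
proof -
  obtain u where u: "u \<in> p" "t \<subseteq>\<^sub>m u" "t \<noteq> u"
    using P t unfolding pruned_def by blast
  have tS: "t \<in> Seqs r" and uS: "u \<in> Seqs r"
    using tree_Seqs T t u(1) by blast+
  have lt: "len t \<prec> len u"
    using map_le_neq_imp_lt[OF tS uS u(2,3)] .
  have "trunc u (osucc (len t)) \<in> p"
    using tree_trunc[OF T u(1) osucc_least[OF lt]] .
  moreover have "trunc u (len t) = t"
    using map_le_imp_trunc[OF tS uS u(2)] by simp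
  ultimately show ?thesis
    using trunc_osucc(1)[OF uS lt] by metis
qed

lemma prunedI:
  assumes T: "is_tree r p" and ext: "\<forall>t\<in>p. \<exists>b. extend t b \<in> p"
  shows "pruned r p"
  unfolding pruned_def
  using ext map_le_extend extend_neq tree_Seqs[OF T] by metis

subsection \<open>Every node of a pruned closed tree lies on a branch\<close>

lemma restrict_eq_trunc:
  assumes "t \<subseteq>\<^sub>m U" and "underS r a \<subseteq> dom t"
  shows "U |` underS r a = trunc t a"
proof
  fix z
  show "(U |` underS r a) z = trunc t a z"
    using assms unfolding trunc_def map_le_def by (cases "z \<in> underS r a") (auto simp: subset_iff)
qed

lemma chain_Union_map:
  assumes CS: "C \<subseteq> Seqs r" and chain: "\<forall>s\<in>C. \<forall>t\<in>C. s \<subseteq>\<^sub>m t \<or> t \<subseteq>\<^sub>m s"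
  obtains U where "\<forall>t\<in>C. t \<subseteq>\<^sub>m U" and "dom U = (\<Union>t\<in>C. underS r (len t))"
proof -
  define U where "U z = (if \<exists>t\<in>C. z \<in> dom t then (SOME t. t \<in> C \<and> z \<in> dom t) z else None)" for z
  have U: "\<forall>t\<in>C. t \<subseteq>\<^sub>m U"
    unfolding map_le_def
  proof (intro ballI)
    fix t z
    assume t: "t \<in> C" and z: "z \<in> dom t"
    define t' where "t' = (SOME t. t \<in> C \<and> z \<in> dom t)"
    have t': "t' \<in> C \<and> z \<in> dom t'"
      unfolding t'_def using t z by (rule someI[where x = t, OF conjI])
    have "U z = t' z"
      unfolding U_def t'_def using t z by auto
    moreover have "t z = t' z"
      using chain t t' z unfolding map_le_def by (metis domIff)
    ultimately show "t z = U z"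
      by simp
  qed
  have "dom U \<subseteq> (\<Union>t\<in>C. dom t)"
  proof
    fix z
    assume "z \<in> dom U"
    then show "z \<in> (\<Union>t\<in>C. dom t)"
      unfolding U_def by (auto split: if_splits)
  qed
  moreover have "(\<Union>t\<in>C. dom t) \<subseteq> dom U"
    using U map_le_implies_dom_le by blast
  ultimately have "dom U = (\<Union>t\<in>C. dom t)"
    by (rule subset_antisym)
  also have "\<dots> = (\<Union>t\<in>C. underS r (len t))"
    by (rule SUP_cong[OF refl]) (use CS dom_Seqs in blast)
  finally have "dom U = (\<Union>t\<in>C. underS r (len t))" .
  then show ?thesis
    by (rule that[OF U])
qed

lemma downward_closed_eq_underS:
  assumes down: "\<forall>a\<in>D. \<forall>b. b \<prec> a \<longrightarrow> b \<in> D" and "a \<notin> D"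
  shows "\<exists>d. D = underS r d"
proof -
  obtain d where "d \<notin> D" and least: "\<forall>b. b \<notin> D \<longrightarrow> (d, b) \<in> r"
    using exists_least[where P = "\<lambda>b. b \<notin> D"] assms(2) by blast
  have "D = underS r d"
  proof (intro set_eqI iffI)
    fix b
    assume "b \<in> D"
    then show "b \<in> underS r d"
      using down \<open>d \<notin> D\<close> not_lt_iff[of b d] unfolding underS_conv lt_def by blast
  next
    fix b
    assume "b \<in> underS r d"
    then show "b \<in> D"
      using least not_lt_iff unfolding underS_conv by blast
  qed
  then show ?thesis
    by blast
qed

context
  fixes p C U
  assumes T: "is_tree r p" and Cp: "C \<subseteq> p"
    and U: "\<forall>t\<in>C. t \<subseteq>\<^sub>m U" and domU: "dom U = (\<Union>t\<in>C. underS r (len t))"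
begin

lemma chain_union_restrict_mem:
  assumes t: "t \<in> C" and a: "a \<prec> len t"
  shows "U |` underS r a \<in> p"
proof -
  have tS: "t \<in> Seqs r"
    using t Cp tree_Seqs[OF T] by blast
  then have "U |` underS r a = trunc t a"
    using restrict_eq_trunc U t dom_Seqs[OF tS] underS_mono[OF lt_imp_r[OF a]] by blast
  then show ?thesis
    using tree_trunc[OF T _ lt_imp_r[OF a]] t Cp by auto
qed

lemma chain_union_total_branch:
  assumes "dom U = UNIV"
  shows "\<exists>x\<in>branches r p. U = Some \<circ> x"
proof -
  define x where "x a = the (U a)" for a
  have Ux: "Some \<circ> x = U"
    unfolding x_def using assms by (intro ext) (metis UNIV_I comp_apply domD option.sel)
  have "U |` underS r a \<in> p" for a
  proof -
    obtain t where "t \<in> C" "a \<prec> len t"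
      using assms domU unfolding underS_conv by blast
    then show ?thesis
      using chain_union_restrict_mem by blast
  qed
  then have "x \<in> branches r p"
    using Ux by (simp add: branches_def restr_def)
  then show ?thesis
    using Ux by blast
qed

lemma chain_union_bounded_mem:
  assumes Cl: "lt_kappa_closed r p" and "C \<noteq> {}" and d: "dom U = underS r d"
  shows "U \<in> p"
proof (cases "\<exists>t\<in>C. len t = d")
  case True
  then show ?thesis
    using map_le_len_eq[OF _ SeqsI[OF d]] len_eqI[OF d] U Cp tree_Seqs[OF T] by (metis subsetD)
next
  case False
  then have lt_d: "len t \<prec> d" if "t \<in> C" for t
    using d domU that not_lt_iff[of "len t" d] unfolding underS_conv lt_def by blast
  have "is_limit r d"
  proof (cases d rule: ordinal_cases)
    case zero
    then show ?thesis
      using lt_d \<open>C \<noteq> {}\<close> underS_ozero unfolding underS_conv by blast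
  next
    case (succ g)
    then obtain t where "t \<in> C" "g \<prec> len t"
      using d domU lt_osucc unfolding underS_conv by blast
    then show ?thesis
      using succ lt_d osucc_least not_lt_iff by blast
  qed
  moreover have "U |` underS r a \<in> p" if "a \<prec> d" for a
    using that d domU chain_union_restrict_mem unfolding underS_conv by blast
  ultimately show ?thesis
    using Cl d unfolding lt_kappa_closed_def by blast
qed

end

lemma chain_upper_bound:
  assumes T: "is_tree r p" and Cl: "lt_kappa_closed r p"
    and Cp: "C \<subseteq> p" and "C \<noteq> {}" and chain: "\<forall>s\<in>C. \<forall>t\<in>C. s \<subseteq>\<^sub>m t \<or> t \<subseteq>\<^sub>m s"
  shows "(\<exists>x\<in>branches r p. \<forall>t\<in>C. t \<subseteq>\<^sub>m Some \<circ> x) \<or> (\<exists>u\<in>p. \<forall>t\<in>C. t \<subseteq>\<^sub>m u)"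
proof -
  obtain U where U: "\<forall>t\<in>C. t \<subseteq>\<^sub>m U" and domU: "dom U = (\<Union>t\<in>C. underS r (len t))"
    using chain_Union_map Cp tree_Seqs[OF T] chain by (metis subsetI subsetD)
  have "\<forall>a\<in>dom U. \<forall>b. b \<prec> a \<longrightarrow> b \<in> dom U"
    unfolding domU underS_conv using lt_trans by blast
  then consider "dom U = UNIV" | d where "dom U = underS r d"
    using downward_closed_eq_underS[of "dom U"] by (metis UNIV_eq_I)
  then show ?thesis
    using chain_union_total_branch[OF T Cp U domU] chain_union_bounded_mem[OF T Cp U domU Cl \<open>C \<noteq> {}\<close>] U
    by cases metis+
qed

lemma map_le_imp_restr:
  assumes "s \<in> Seqs r" and "s \<subseteq>\<^sub>m Some \<circ> x"
  shows "restr r x (len s) = s"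
  using restrict_eq_trunc[OF assms(2)] trunc_len[OF assms(1)] dom_Seqs[OF assms(1)]
  unfolding restr_def by simp

lemma tree_branch_through:
  assumes T: "is_tree r p" and P: "pruned r p" and Cl: "lt_kappa_closed r p" and s: "s \<in> p"
  shows "\<exists>x\<in>branches r p. restr r x (len s) = s"
proof (rule ccontr)
  assume no_branch: "\<not> ?thesis"
  define A where "A = {t\<in>p. s \<subseteq>\<^sub>m t}"
  have sS: "s \<in> Seqs r"
    using tree_Seqs[OF T s] .
  have "partial_order_on A (relation_of (\<subseteq>\<^sub>m) A)"
    by (rule partial_order_on_relation_ofI) (auto intro: map_le_trans map_le_antisym)
  moreover have "\<exists>u\<in>A. \<forall>t\<in>C. t \<subseteq>\<^sub>m u" if C: "C \<in> Chains (relation_of (\<subseteq>\<^sub>m) A)" for C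
  proof (cases "C = {}")
    case True
    then show ?thesis
      using s by (auto simp: A_def)
  next
    case False
    have CA: "C \<subseteq> A" and chain: "\<forall>s\<in>C. \<forall>t\<in>C. s \<subseteq>\<^sub>m t \<or> t \<subseteq>\<^sub>m s"
      using C unfolding Chains_def relation_of_def by auto
    obtain t0 where t0: "t0 \<in> C"
      using False by blast
    have "\<not> (\<forall>t\<in>C. t \<subseteq>\<^sub>m Some \<circ> x)" if "x \<in> branches r p" for x
    proof
      assume "\<forall>t\<in>C. t \<subseteq>\<^sub>m Some \<circ> x"
      then have "s \<subseteq>\<^sub>m Some \<circ> x"
        using t0 CA map_le_trans unfolding A_def by blast
      then show False
        using map_le_imp_restr[OF sS] no_branch that by blast
    qed
    then obtain u where "u \<in> p" "\<forall>t\<in>C. t \<subseteq>\<^sub>m u"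
      using chain_upper_bound[OF T Cl _ False chain] CA unfolding A_def by blast
    then show ?thesis
      using t0 CA map_le_trans unfolding A_def by blast
  qed
  ultimately obtain m where m: "m \<in> A" and maximal: "\<forall>a\<in>A. m \<subseteq>\<^sub>m a \<longrightarrow> a = m"
    using predicate_Zorn[of A "(\<subseteq>\<^sub>m)"] by blast
  then obtain t where "t \<in> p" "m \<subseteq>\<^sub>m t" "m \<noteq> t"
    using P unfolding pruned_def A_def by blast
  then show False
    using m maximal map_le_trans unfolding A_def by blast
qed

lemma MClub_tree: "p \<in> MClub r \<Longrightarrow> is_tree r p"
  unfolding MClub_def by blast

lemma MClub_pruned: "p \<in> MClub r \<Longrightarrow> pruned r p"
  unfolding MClub_def by blast

lemma MClub_closed: "p \<in> MClub r \<Longrightarrow> lt_kappa_closed r p"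
  unfolding MClub_def by blast

lemma MClub_branch_club:
  "p \<in> MClub r \<Longrightarrow> x \<in> branches r p \<Longrightarrow> club r {a. club_splitting r p (restr r x a)}"
  unfolding MClub_def by blast

text \<open>Density of club-splitting nodes follows from the other clauses: every node lies on a branch,
  and along a branch the club-splitting levels are unbounded.\<close>

lemma MClubI:
  assumes T: "is_tree r p" and P: "pruned r p" and Cl: "lt_kappa_closed r p"
    and B: "\<forall>x\<in>branches r p. club r {a. club_splitting r p (restr r x a)}"
  shows "p \<in> MClub r"
proof -
  have "\<exists>t\<in>p. s \<subseteq>\<^sub>m t \<and> club_splitting r p t" if s: "s \<in> p" for s
  proof -
    obtain x where x: "x \<in> branches r p" "restr r x (len s) = s"
      using tree_branch_through[OF T P Cl s] by blast
    obtain a where a: "club_splitting r p (restr r x a)" "len s \<prec> a"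
      using club_exists_greater B x(1) by blast
    then show ?thesis
      using restr_map_le[OF lt_imp_r[OF a(2)], of x] x branches_restr by metis
  qed
  then show ?thesis
    unfolding MClub_def using assms by blast
qed

lemma succ_set_mono: "t \<in> Seqs r \<Longrightarrow> q \<subseteq> p \<Longrightarrow> succ_set r t q \<subseteq> succ_set r t p"
  using succ_set_conv by auto

lemma succ_set_nonempty:
  assumes "is_tree r p" and "pruned r p" and "t \<in> p"
  shows "succ_set r t p \<noteq> {}"
proof -
  obtain b where "extend t b \<in> p"
    using tree_extend_exists[OF assms] by blast
  then show ?thesis
    using succ_set_conv[OF tree_Seqs[OF assms(1,3)]] by blast
qed

definition normal :: "('a \<Rightarrow> 'a option) set \<Rightarrow> bool" where
  "normal p \<longleftrightarrow> (\<forall>t\<in>p. club r (succ_set r t p) \<or> (\<exists>b. succ_set r t p = {b}))"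

definition MClub_normal :: "('a \<Rightarrow> 'a option) set set" where
  "MClub_normal = {p \<in> MClub r. normal p}"

lemma MClub_normalD: "p \<in> MClub_normal \<Longrightarrow> p \<in> MClub r"
  unfolding MClub_normal_def by blast

lemma normalD: "normal p \<Longrightarrow> t \<in> p \<Longrightarrow> club r (succ_set r t p) \<or> (\<exists>b. succ_set r t p = {b})"
  unfolding normal_def by blast

lemma MClub_normalD_succ:
  "p \<in> MClub_normal \<Longrightarrow> t \<in> p \<Longrightarrow> club r (succ_set r t p) \<or> (\<exists>b. succ_set r t p = {b})"
  unfolding MClub_normal_def normal_def by blast

lemma normal_pruned:
  assumes T: "is_tree r p" and N: "normal p"
  shows "pruned r p"
proof (rule prunedI[OF T], intro ballI)
  fix t
  assume t: "t \<in> p"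
  then obtain b where "b \<in> succ_set r t p"
    using normalD[OF N] club_exists_greater by blast
  then show "\<exists>b. extend t b \<in> p"
    using succ_set_conv tree_Seqs[OF T t] by blast
qed

lemma normal_club_splittingI:
  assumes "normal p" and "t \<in> p" and "club r C" and "C \<subseteq> succ_set r t p"
  shows "club_splitting r p t"
  using normalD[OF assms(1,2)] club_not_subset_singleton[OF assms(3)] assms(4)
  unfolding club_splitting_def by blast

subsection \<open>Intersections of small chains of normal conditions\<close>

lemma succ_set_Inter: "t \<in> Seqs r \<Longrightarrow> succ_set r t (\<Inter>\<P>) = (\<Inter>p\<in>\<P>. succ_set r t p)"
  using succ_set_conv by auto

lemma tree_Inter:
  assumes "\<P> \<noteq> {}" and "\<forall>p\<in>\<P>. is_tree r p"
  shows "is_tree r (\<Inter>\<P>)"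
  unfolding is_tree_def
proof (intro conjI ballI impI)
  show "\<Inter>\<P> \<noteq> {}"
    using tree_empty assms(2) by blast
  show "\<Inter>\<P> \<subseteq> Seqs r"
    using assms tree_Seqs by blast
  show "s \<in> \<Inter>\<P>" if "t \<in> \<Inter>\<P>" "s \<in> Seqs r" "s \<subseteq>\<^sub>m t" for t s
    using that tree_map_le assms(2) by blast
qed

lemma lt_kappa_closed_Inter:
  assumes "\<forall>p\<in>\<P>. lt_kappa_closed r p"
  shows "lt_kappa_closed r (\<Inter>\<P>)"
  unfolding lt_kappa_closed_def
proof (intro allI impI InterI)
  fix s d p
  assume s: "dom s = underS r d \<and> is_limit r d \<and> (\<forall>a. a \<prec> d \<longrightarrow> s |` underS r a \<in> \<Inter>\<P>)"
    and p: "p \<in> \<P>"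
  have "lt_kappa_closed r p"
    using assms p by blast
  moreover have "\<forall>a. a \<prec> d \<longrightarrow> s |` underS r a \<in> p"
    using s p by blast
  ultimately show "s \<in> p"
    using s unfolding lt_kappa_closed_def by blast
qed

text \<open>In a chain, a condition below one in which t has a single successor still has that
  successor, because it is pruned.\<close>

lemma MClub_normal_chain_succ_set_singleton:
  assumes P: "\<P> \<subseteq> MClub_normal" and chain: "\<forall>p\<in>\<P>. \<forall>p'\<in>\<P>. p \<subseteq> p' \<or> p' \<subseteq> p"
    and t: "t \<in> \<Inter>\<P>" and tS: "t \<in> Seqs r"
    and p0: "p0 \<in> \<P>" and not_club: "\<not> club r (succ_set r t p0)"
  shows "\<exists>b. succ_set r t (\<Inter>\<P>) = {b}"
proof -
  obtain b where b: "succ_set r t p0 = {b}"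
    using MClub_normalD_succ[of p0 t] not_club p0 t P by blast
  have "b \<in> succ_set r t p" if p: "p \<in> \<P>" for p
  proof (cases "p0 \<subseteq> p")
    case True
    then show ?thesis
      using succ_set_mono[OF tS True] b by blast
  next
    case False
    then have "p \<subseteq> p0"
      using chain p p0 by blast
    then have "succ_set r t p \<subseteq> {b}"
      using succ_set_mono[OF tS] b by blast
    moreover have "succ_set r t p \<noteq> {}"
      using succ_set_nonempty MClub_tree MClub_pruned MClub_normalD p P t by blast
    ultimately show ?thesis
      by blast
  qed
  then show ?thesis
    using succ_set_Inter[OF tS] b p0 by blast
qed

lemma MClub_normal_chain_succ_set:
  assumes P: "\<P> \<subseteq> MClub_normal" and small: "|\<P>| <o r"
    and chain: "\<forall>p\<in>\<P>. \<forall>p'\<in>\<P>. p \<subseteq> p' \<or> p' \<subseteq> p" and t: "t \<in> \<Inter>\<P>" and tS: "t \<in> Seqs r"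
  shows "club r (succ_set r t (\<Inter>\<P>)) \<longleftrightarrow> (\<forall>p\<in>\<P>. club r (succ_set r t p))"
    and "club r (succ_set r t (\<Inter>\<P>)) \<or> (\<exists>b. succ_set r t (\<Inter>\<P>) = {b})"
proof -
  have "\<exists>b. succ_set r t (\<Inter>\<P>) = {b}" if "\<not> club r (succ_set r t p0)" and "p0 \<in> \<P>" for p0
    using MClub_normal_chain_succ_set_singleton[OF P chain t tS] that by blast
  moreover have "club r (succ_set r t (\<Inter>\<P>))" if "\<forall>p\<in>\<P>. club r (succ_set r t p)"
    using club_Inter[OF small_image[OF small, of "succ_set r t"]] that succ_set_Inter[OF tS]
    by simp
  moreover have "club r (succ_set r t p)" if cl: "club r (succ_set r t (\<Inter>\<P>))" and p: "p \<in> \<P>" for p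
  proof -
    have "normal p" and "t \<in> p"
      using P p t unfolding MClub_normal_def by auto
    moreover have "succ_set r t (\<Inter>\<P>) \<subseteq> succ_set r t p"
      using succ_set_mono[OF tS Inter_lower[OF p]] .
    ultimately show ?thesis
      using normal_club_splittingI cl unfolding club_splitting_def by blast
  qed
  ultimately show "club r (succ_set r t (\<Inter>\<P>)) \<longleftrightarrow> (\<forall>p\<in>\<P>. club r (succ_set r t p))"
    and "club r (succ_set r t (\<Inter>\<P>)) \<or> (\<exists>b. succ_set r t (\<Inter>\<P>) = {b})"
    by blast+
qed

lemma MClub_normal_chain_Inter:
  assumes ne: "\<P> \<noteq> {}" and P: "\<P> \<subseteq> MClub_normal" and small: "|\<P>| <o r"
    and chain: "\<forall>p\<in>\<P>. \<forall>p'\<in>\<P>. p \<subseteq> p' \<or> p' \<subseteq> p"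
  shows "\<Inter>\<P> \<in> MClub_normal"
proof -
  have M: "\<forall>p\<in>\<P>. p \<in> MClub r"
    using P MClub_normalD by blast
  have T: "is_tree r (\<Inter>\<P>)"
    using tree_Inter[OF ne] M MClub_tree by blast
  note succ = MClub_normal_chain_succ_set[OF P small chain _ tree_Seqs[OF T]]
  have N: "normal (\<Inter>\<P>)"
    unfolding normal_def using succ(2) by blast
  have "club r {a. club_splitting r (\<Inter>\<P>) (restr r x a)}" if x: "x \<in> branches r (\<Inter>\<P>)" for x
  proof -
    have "{a. club_splitting r (\<Inter>\<P>) (restr r x a)} = (\<Inter>p\<in>\<P>. {a. club_splitting r p (restr r x a)})"
      using succ(1) branches_restr[OF x] unfolding club_splitting_def by blast
    moreover have "x \<in> branches r p" if "p \<in> \<P>" for p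
      using x that branches_mono by blast
    then have "club r (\<Inter>p\<in>\<P>. {a. club_splitting r p (restr r x a)})"
      by (intro club_Inter[OF small_image[OF small]]) (use M MClub_branch_club in blast)
    ultimately show ?thesis
      by simp
  qed
  then have "\<Inter>\<P> \<in> MClub r"
    using MClubI T normal_pruned[OF T N] lt_kappa_closed_Inter M MClub_closed by blast
  then show ?thesis
    using N unfolding MClub_normal_def by blast
qed

lemma MClub_normal_decreasing_Inter:
  assumes ne: "A \<noteq> {}" and small: "|A| <o r" and N: "\<And>a. a \<in> A \<Longrightarrow> P a \<in> MClub_normal"
    and dec: "\<And>a b. a \<in> A \<Longrightarrow> b \<in> A \<Longrightarrow> (a, b) \<in> r \<Longrightarrow> P b \<subseteq> P a"
  shows "(\<Inter>a\<in>A. P a) \<in> MClub_normal"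
proof (rule MClub_normal_chain_Inter)
  show "P ` A \<noteq> {}" and "P ` A \<subseteq> MClub_normal" and "|P ` A| <o r"
    using ne N small_image[OF small] by blast+
  show "\<forall>p\<in>P ` A. \<forall>p'\<in>P ` A. p \<subseteq> p' \<or> p' \<subseteq> p"
    using dec r_total by (smt (verit) imageE)
qed

lemma limit_mem_decreasing:
  assumes t: "t \<in> Seqs r" and lim: "is_limit r (len t)"
    and M: "\<And>a. a \<prec> len t \<Longrightarrow> P a \<in> MClub r"
    and dec: "\<And>a b. (a, b) \<in> r \<Longrightarrow> b \<prec> len t \<Longrightarrow> P b \<subseteq> P a"
    and mem: "\<And>a. a \<prec> len t \<Longrightarrow> trunc t a \<in> P a"
    and a: "a \<prec> len t"
  shows "t \<in> P a"
proof -
  have "trunc t b \<in> P a" if b: "b \<prec> len t" for b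
  proof (cases "(a, b) \<in> r")
    case True
    then show ?thesis
      using dec b mem by blast
  next
    case False
    then have "trunc t b \<subseteq>\<^sub>m trunc t a"
      using trunc_mono r_total by blast
    then show ?thesis
      using tree_map_le[OF MClub_tree[OF M[OF a]] mem[OF a]] trunc_Seqs[OF t lt_imp_r[OF b]] by blast
  qed
  then show ?thesis
    using MClub_closed[OF M[OF a]] lim dom_Seqs[OF t] unfolding lt_kappa_closed_def trunc_def by blast
qed

subsection \<open>Cones\<close>

lemma unique_extend_below:
  assumes t: "t \<in> Seqs r" and s: "s \<in> Seqs r" and "t \<subseteq>\<^sub>m s" and "t \<noteq> s"
  obtains b0 where "extend t b0 \<subseteq>\<^sub>m s"
    and "\<And>b. extend t b \<subseteq>\<^sub>m s \<or> s \<subseteq>\<^sub>m extend t b \<Longrightarrow> b = b0"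
proof -
  have lt: "len t \<prec> len s"
    using map_le_neq_imp_lt assms by blast
  have sl: "(osucc (len t), len s) \<in> r"
    using osucc_least[OF lt] .
  define u where "u = trunc s (osucc (len t))"
  have uS: "u \<in> Seqs r" and lu: "len u = osucc (len t)"
    unfolding u_def using trunc_Seqs len_trunc s sl by blast+
  have "u = extend t (the (s (len t)))"
    using trunc_osucc(1)[OF s lt] map_le_imp_trunc[OF t s \<open>t \<subseteq>\<^sub>m s\<close>] unfolding u_def by simp
  moreover have "extend t b = u" if "extend t b \<subseteq>\<^sub>m s \<or> s \<subseteq>\<^sub>m extend t b" for b
  proof -
    have eS: "extend t b \<in> Seqs r" and le: "len (extend t b) = osucc (len t)"
      using extend_Seqs len_extend t by blast+
    show ?thesis
    proof (cases "extend t b \<subseteq>\<^sub>m s")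
      case True
      then show ?thesis
        using map_le_imp_trunc[OF eS s] le unfolding u_def by simp
    next
      case False
      then have se: "s \<subseteq>\<^sub>m extend t b"
        using that by blast
      then have "len s = osucc (len t)"
        using map_le_imp_len[OF s eS] le sl r_antisym by simp
      then show ?thesis
        using map_le_len_eq[OF s eS se] le trunc_len[OF s] unfolding u_def by simp
    qed
  qed
  moreover have "u \<subseteq>\<^sub>m s"
    unfolding u_def by (rule trunc_map_le)
  ultimately show ?thesis
    using that extend_inj by metis
qed

lemma comparable_limit:
  assumes s': "s' \<in> Seqs r" and s: "s \<in> Seqs r" and lim: "is_limit r (len s')"
    and comp: "\<forall>a. a \<prec> len s' \<longrightarrow> trunc s' a \<subseteq>\<^sub>m s \<or> s \<subseteq>\<^sub>m trunc s' a"
  shows "s' \<subseteq>\<^sub>m s \<or> s \<subseteq>\<^sub>m s'"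
proof (cases "len s \<prec> len s'")
  case True
  have tS: "trunc s' (len s) \<in> Seqs r" and lt: "len (trunc s' (len s)) = len s"
    using trunc_Seqs len_trunc s' lt_imp_r[OF True] by blast+
  then have "trunc s' (len s) = s"
    using comp True map_le_len_eq[OF tS s] map_le_len_eq[OF s tS] by metis
  then show ?thesis
    using trunc_map_le by metis
next
  case False
  have "s' z = s z" if "z \<in> dom s'" for z
  proof -
    have "z \<prec> len s'"
      using that dom_Seqs[OF s'] unfolding underS_conv by blast
    then obtain a where a: "z \<prec> a" "a \<prec> len s'"
      using lim unfolding is_limit_def by blast
    have tS: "trunc s' a \<in> Seqs r" and lt: "len (trunc s' a) = a"
      using trunc_Seqs len_trunc s' lt_imp_r[OF a(2)] by blast+
    have "\<not> s \<subseteq>\<^sub>m trunc s' a"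
      using map_le_imp_len[OF s tS] lt a(2) False r_lt_trans by metis
    then have "trunc s' a \<subseteq>\<^sub>m s"
      using comp a(2) by blast
    moreover have "z \<in> dom (trunc s' a)"
      using dom_trunc[OF s' lt_imp_r[OF a(2)]] a(1) unfolding underS_conv by blast
    ultimately show ?thesis
      using trunc_apply[OF a(1)] unfolding map_le_def by metis
  qed
  then show ?thesis
    unfolding map_le_def by blast
qed

definition cone :: "('a \<Rightarrow> 'a option) set \<Rightarrow> ('a \<Rightarrow> 'a option) \<Rightarrow> ('a \<Rightarrow> 'a option) set" where
  "cone c s = {u \<in> c. u \<subseteq>\<^sub>m s \<or> s \<subseteq>\<^sub>m u}"

lemma cone_subset: "cone c s \<subseteq> c"
  unfolding cone_def by blast

lemma mem_cone: "s \<in> c \<Longrightarrow> s \<in> cone c s"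
  unfolding cone_def by simp

context
  fixes c s
  assumes T: "is_tree r c" and s: "s \<in> c"
begin

lemma Seqs_cone: "u \<in> cone c s \<Longrightarrow> u \<in> Seqs r"
  using cone_subset tree_Seqs[OF T] by blast

lemma tree_cone: "is_tree r (cone c s)"
  unfolding is_tree_def
proof (intro conjI ballI impI)
  show "cone c s \<noteq> {}"
    using mem_cone[OF s] by blast
  show "cone c s \<subseteq> Seqs r"
    using Seqs_cone by blast
  fix u v
  assume u: "u \<in> cone c s" and v: "v \<in> Seqs r" and vu: "v \<subseteq>\<^sub>m u"
  have "v \<in> c"
    using tree_map_le[OF T _ v vu] u cone_subset by blast
  moreover have "v \<subseteq>\<^sub>m s \<or> s \<subseteq>\<^sub>m v"
    using u map_le_trans[OF vu] Seqs_map_le_comparable[OF v tree_Seqs[OF T s] Seqs_cone[OF u] vu]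
    unfolding cone_def by blast
  ultimately show "v \<in> cone c s"
    unfolding cone_def by blast
qed

lemma succ_set_cone_above:
  assumes "t \<in> Seqs r" and "s \<subseteq>\<^sub>m t"
  shows "succ_set r t (cone c s) = succ_set r t c"
  using map_le_trans[OF assms(2) map_le_extend[OF assms(1)]]
  unfolding succ_set_conv[OF assms(1)] cone_def by auto

lemma succ_set_cone_below:
  assumes t: "t \<in> cone c s" and "\<not> s \<subseteq>\<^sub>m t"
  shows "\<exists>b. succ_set r t (cone c s) = {b}"
proof -
  have tS: "t \<in> Seqs r" and sS: "s \<in> Seqs r"
    using Seqs_cone[OF t] tree_Seqs[OF T s] .
  have "t \<subseteq>\<^sub>m s" and "t \<noteq> s"
    using t assms(2) unfolding cone_def by auto
  then obtain b0 where b0: "extend t b0 \<subseteq>\<^sub>m s"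
    and unique: "\<And>b. extend t b \<subseteq>\<^sub>m s \<or> s \<subseteq>\<^sub>m extend t b \<Longrightarrow> b = b0"
    using unique_extend_below[OF tS sS] by blast
  have "extend t b0 \<in> cone c s"
    using tree_map_le[OF T s extend_Seqs[OF tS] b0] b0 unfolding cone_def by blast
  then have "succ_set r t (cone c s) = {b0}"
    using unique unfolding succ_set_conv[OF tS] cone_def by blast
  then show ?thesis
    by blast
qed

lemma lt_kappa_closed_cone:
  assumes Cl: "lt_kappa_closed r c"
  shows "lt_kappa_closed r (cone c s)"
  unfolding lt_kappa_closed_def
proof (intro allI impI)
  fix s' d
  assume H: "dom s' = underS r d \<and> is_limit r d \<and> (\<forall>a. a \<prec> d \<longrightarrow> s' |` underS r a \<in> cone c s)"
  have s'S: "s' \<in> Seqs r" and len: "len s' = d"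
    using H SeqsI len_eqI by blast+
  have "s' \<in> c"
    using Cl H cone_subset unfolding lt_kappa_closed_def by blast
  moreover have "s' \<subseteq>\<^sub>m s \<or> s \<subseteq>\<^sub>m s'"
    using comparable_limit[OF s'S tree_Seqs[OF T s]] H len unfolding cone_def trunc_def by blast
  ultimately show "s' \<in> cone c s"
    unfolding cone_def by blast
qed

lemma cone_club_splitting_levels:
  assumes x: "x \<in> branches r (cone c s)"
  shows "{a. club_splitting r (cone c s) (restr r x a)}
    = {a. club_splitting r c (restr r x a)} \<inter> {a. (len s, a) \<in> r}"
proof -
  have sS: "s \<in> Seqs r"
    using tree_Seqs[OF T s] .
  have "restr r x (len s) = s"
    using branches_restr[OF x, of "len s"] map_le_len_eq[OF restr_Seqs sS] map_le_len_eq[OF sS restr_Seqs]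
      len_restr unfolding cone_def by (metis (no_types, lifting) mem_Collect_eq)
  then have above: "s \<subseteq>\<^sub>m restr r x a \<longleftrightarrow> (len s, a) \<in> r" for a
    using restr_map_le map_le_imp_len[OF sS restr_Seqs] len_restr by metis
  have "club_splitting r (cone c s) (restr r x a) \<longleftrightarrow> club_splitting r c (restr r x a) \<and> (len s, a) \<in> r"
    for a
  proof (cases "s \<subseteq>\<^sub>m restr r x a")
    case True
    then show ?thesis
      using succ_set_cone_above[OF restr_Seqs] above unfolding club_splitting_def by simp
  next
    case False
    then show ?thesis
      using succ_set_cone_below[OF branches_restr[OF x]] above club_not_subset_singleton
      unfolding club_splitting_def by force
  qed
  then show ?thesis
    by blast
qed

lemma MClub_below_cone_mem_apex:
  assumes q: "q \<in> MClub r" and sub: "q \<subseteq> cone c s"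
  shows "s \<in> q"
proof -
  have Tq: "is_tree r q"
    using MClub_tree[OF q] .
  obtain u where u: "u \<in> q" "club_splitting r q u"
    using q tree_empty[OF Tq] unfolding MClub_def by blast
  have "s \<subseteq>\<^sub>m u"
  proof (rule ccontr)
    assume "\<not> s \<subseteq>\<^sub>m u"
    then obtain b where "succ_set r u (cone c s) = {b}"
      using succ_set_cone_below u sub by blast
    then show False
      using u(2) succ_set_mono[OF tree_Seqs[OF Tq u(1)] sub] club_not_subset_singleton
      unfolding club_splitting_def by blast
  qed
  then show ?thesis
    using tree_map_le[OF Tq u(1) tree_Seqs[OF T s]] by blast
qed

lemma cone_MClub_normal:
  assumes N: "c \<in> MClub_normal"
  shows "cone c s \<in> MClub_normal"
proof -
  have M: "c \<in> MClub r"
    using MClub_normalD[OF N] .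
  have "normal (cone c s)"
    unfolding normal_def
  proof
    fix t
    assume t: "t \<in> cone c s"
    show "club r (succ_set r t (cone c s)) \<or> (\<exists>b. succ_set r t (cone c s) = {b})"
    proof (cases "s \<subseteq>\<^sub>m t")
      case True
      moreover have "t \<in> c"
        using t cone_subset by blast
      ultimately show ?thesis
        using succ_set_cone_above[OF Seqs_cone[OF t]] MClub_normalD_succ[OF N] by metis
    next
      case False
      then show ?thesis
        using succ_set_cone_below[OF t] by blast
    qed
  qed
  moreover have "club r {a. club_splitting r (cone c s) (restr r x a)}"
    if x: "x \<in> branches r (cone c s)" for x
  proof -
    have "club r {a. club_splitting r c (restr r x a)}"
      using MClub_branch_club[OF M] branches_mono[OF cone_subset] x by blast
    then show ?thesis
      unfolding cone_club_splitting_levels[OF x] using club_Int club_atLeast by blast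
  qed
  ultimately show ?thesis
    using MClubI tree_cone normal_pruned[OF tree_cone] lt_kappa_closed_cone[OF MClub_closed[OF M]]
    unfolding MClub_normal_def by blast
qed

end

subsection \<open>Normal subconditions\<close>

context
  fixes c s
  assumes M: "c \<in> MClub r" and s: "s \<in> c"
begin

definition thin_succ :: "('a \<Rightarrow> 'a option) \<Rightarrow> 'a" where
  "thin_succ u = (if u \<subseteq>\<^sub>m s \<and> u \<noteq> s then the (s (len u)) else (SOME b. extend u b \<in> c))"

definition thin :: "('a \<Rightarrow> 'a option) set" where
  "thin = {t \<in> c. \<forall>a. a \<prec> len t \<longrightarrow> \<not> club_splitting r c (trunc t a) \<longrightarrow>
                      t a = Some (thin_succ (trunc t a))}"

lemma thin_subset: "thin \<subseteq> c"
  unfolding thin_def by blast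

lemma Seqs_thin: "t \<in> thin \<Longrightarrow> t \<in> Seqs r"
  using thin_subset tree_Seqs[OF MClub_tree[OF M]] by blast

lemma extend_thin_succ:
  assumes u: "u \<in> c"
  shows "extend u (thin_succ u) \<in> c"
proof (cases "u \<subseteq>\<^sub>m s \<and> u \<noteq> s")
  case True
  have uS: "u \<in> Seqs r" and sS: "s \<in> Seqs r"
    using tree_Seqs[OF MClub_tree[OF M]] u s by blast+
  have lt: "len u \<prec> len s"
    using map_le_neq_imp_lt[OF uS sS] True by blast
  have "trunc s (osucc (len u)) \<in> c"
    using tree_trunc[OF MClub_tree[OF M] s osucc_least[OF lt]] .
  then show ?thesis
    using trunc_osucc(1)[OF sS lt] map_le_imp_trunc[OF uS sS] True unfolding thin_succ_def by simp
next
  case False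
  have "extend u (SOME b. extend u b \<in> c) \<in> c"
    using tree_extend_exists[OF MClub_tree[OF M] MClub_pruned[OF M] u] by (rule someI_ex)
  then show ?thesis
    unfolding thin_succ_def if_not_P[OF False] .
qed

lemma extend_mem_thin_iff:
  assumes u: "u \<in> thin"
  shows "extend u b \<in> thin \<longleftrightarrow> extend u b \<in> c \<and> (\<not> club_splitting r c u \<longrightarrow> b = thin_succ u)"
proof -
  have uS: "u \<in> Seqs r"
    using Seqs_thin[OF u] .
  have "a \<prec> len (extend u b) \<longleftrightarrow> a = len u \<or> a \<prec> len u" for a
    using len_extend[OF uS] lt_osucc_iff unfolding lt_def by auto
  moreover have "trunc (extend u b) a = trunc u a" and "extend u b a = u a" if "a \<prec> len u" for a
    using trunc_extend_below[OF uS lt_imp_r[OF that]] extend_below[OF that] by simp_all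
  moreover have "u a = Some (thin_succ (trunc u a))"
    if "a \<prec> len u" and "\<not> club_splitting r c (trunc u a)" for a
    using u that unfolding thin_def by blast
  ultimately show ?thesis
    using u trunc_extend[OF uS] extend_at_len[of u b] unfolding thin_def by auto
qed

lemma succ_set_thin:
  assumes u: "u \<in> thin"
  shows "succ_set r u thin = (if club_splitting r c u then succ_set r u c else {thin_succ u})"
  using extend_thin_succ thin_subset u extend_mem_thin_iff[OF u] succ_set_conv[OF Seqs_thin[OF u]]
  by auto

lemma tree_thin: "is_tree r thin"
  unfolding is_tree_def
proof (intro conjI ballI impI)
  show "thin \<noteq> {}"
    using tree_empty[OF MClub_tree[OF M]] len_empty underS_ozero unfolding thin_def underS_conv by auto
  show "thin \<subseteq> Seqs r"
    using Seqs_thin by blast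
  fix t v
  assume t: "t \<in> thin" and v: "v \<in> Seqs r" and vt: "v \<subseteq>\<^sub>m t"
  have tS: "t \<in> Seqs r"
    using Seqs_thin[OF t] .
  have l: "(len v, len t) \<in> r" and e: "v = trunc t (len v)"
    using map_le_Seqs_iff[OF v tS] vt by blast+
  have "v a = Some (thin_succ (trunc v a))"
    if a: "a \<prec> len v" and ns: "\<not> club_splitting r c (trunc v a)" for a
  proof -
    have "trunc v a = trunc t a" and "v a = t a"
      using e trunc_trunc[OF lt_imp_r[OF a]] trunc_apply[OF a] by metis+
    then show ?thesis
      using t ns lt_r_trans[OF a l] unfolding thin_def by auto
  qed
  then show "v \<in> thin"
    unfolding thin_def using tree_map_le[OF MClub_tree[OF M] _ v vt] t thin_subset by blast
qed

lemma lt_kappa_closed_thin: "lt_kappa_closed r thin"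
  unfolding lt_kappa_closed_def
proof (intro allI impI)
  fix s' d
  assume H: "dom s' = underS r d \<and> is_limit r d \<and> (\<forall>a. a \<prec> d \<longrightarrow> s' |` underS r a \<in> thin)"
  have s'S: "s' \<in> Seqs r" and len: "len s' = d"
    using H SeqsI len_eqI by blast+
  have "s' a = Some (thin_succ (trunc s' a))"
    if a: "a \<prec> len s'" and ns: "\<not> club_splitting r c (trunc s' a)" for a
  proof -
    obtain b where b: "a \<prec> b" "b \<prec> d"
      using H a len unfolding is_limit_def by blast
    have "trunc s' b \<in> thin"
      using H b(2) unfolding trunc_def by blast
    moreover have "len (trunc s' b) = b"
      using len_trunc s'S len lt_imp_r[OF b(2)] by blast
    moreover have "trunc (trunc s' b) a = trunc s' a" and "trunc s' b a = s' a"
      using trunc_trunc[OF lt_imp_r[OF b(1)]] trunc_apply[OF b(1)] by simp_all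
    ultimately show ?thesis
      using ns b(1) unfolding thin_def by auto
  qed
  moreover have "s' \<in> c"
    using MClub_closed[OF M] H thin_subset unfolding lt_kappa_closed_def by blast
  ultimately show "s' \<in> thin"
    unfolding thin_def by blast
qed

lemma mem_thin: "s \<in> thin"
proof -
  have sS: "s \<in> Seqs r"
    using tree_Seqs[OF MClub_tree[OF M] s] .
  have "s a = Some (thin_succ (trunc s a))" if a: "a \<prec> len s" for a
  proof -
    have "len (trunc s a) = a"
      using len_trunc sS lt_imp_r[OF a] by blast
    then have "thin_succ (trunc s a) = the (s a)"
      using a trunc_map_le unfolding thin_succ_def by auto
    then show ?thesis
      using trunc_osucc(2)[OF sS a] by auto
  qed
  then show ?thesis
    unfolding thin_def using s by blast
qed

lemma thin_MClub_normal: "thin \<in> MClub_normal"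
proof -
  have N: "normal thin"
    unfolding normal_def using succ_set_thin unfolding club_splitting_def by auto
  have "club r {a. club_splitting r thin (restr r x a)}" if x: "x \<in> branches r thin" for x
  proof -
    have "club_splitting r thin (restr r x a) \<longleftrightarrow> club_splitting r c (restr r x a)" for a
      using succ_set_thin[OF branches_restr[OF x]] club_not_subset_singleton
      unfolding club_splitting_def by auto
    moreover have "x \<in> branches r c"
      using branches_mono[OF thin_subset] x by blast
    ultimately show ?thesis
      using MClub_branch_club[OF M] by simp
  qed
  then show ?thesis
    using MClubI tree_thin normal_pruned[OF tree_thin N] lt_kappa_closed_thin N
    unfolding MClub_normal_def by blast
qed

end

lemma exists_MClub_normal_below:
  assumes "c \<in> MClub r" and "s \<in> c"
  shows "\<exists>c'\<in>MClub_normal. c' \<subseteq> c \<and> s \<in> c'"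
  using thin_MClub_normal[OF assms] thin_subset[OF assms] mem_thin[OF assms] by blast

lemma exists_MClub_normal_avoiding:
  assumes N: "c \<in> MClub_normal" and s: "s \<in> c" and X: "X \<in> nowhere_dense r (MClub r)"
  shows "\<exists>q\<in>MClub_normal. q \<subseteq> c \<and> s \<in> q \<and> branches r q \<inter> X = {}"
proof -
  have T: "is_tree r c"
    using MClub_tree[OF MClub_normalD[OF N]] .
  obtain q' where q': "q' \<in> MClub r" "q' \<subseteq> cone c s" "branches r q' \<inter> X = {}"
    using X MClub_normalD[OF cone_MClub_normal[OF T s N]] unfolding nowhere_dense_def by blast
  have "s \<in> q'"
    using MClub_below_cone_mem_apex[OF T s q'(1,2)] .
  then obtain q where q: "q \<in> MClub_normal" "q \<subseteq> q'" "s \<in> q"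
    using exists_MClub_normal_below[OF q'(1)] by blast
  have "branches r q \<inter> X = {}"
    using branches_mono[OF q(2)] q'(3) by blast
  moreover have "q \<subseteq> c"
    using q(2) q'(2) cone_subset by blast
  ultimately show ?thesis
    using q by blast
qed

end

subsection \<open>The fusion construction\<close>

locale fusion = kappa r for r :: "'a rel" +
  fixes p :: "('a \<Rightarrow> 'a option) set" and F :: "'a \<Rightarrow> ('a \<Rightarrow> 'a) set"
  assumes p: "p \<in> MClub r" and F: "\<And>j. F j \<in> nowhere_dense r (MClub r)"
begin

definition p_normal :: "('a \<Rightarrow> 'a option) set" where
  "p_normal = (SOME c. c \<in> MClub_normal \<and> c \<subseteq> p \<and> Map.empty \<in> c)"

lemma p_normal: "p_normal \<in> MClub_normal" "p_normal \<subseteq> p" "Map.empty \<in> p_normal"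
proof -
  have "\<exists>c. c \<in> MClub_normal \<and> c \<subseteq> p \<and> Map.empty \<in> c"
    using exists_MClub_normal_below[OF p tree_empty[OF MClub_tree[OF p]]] by blast
  then show "p_normal \<in> MClub_normal" "p_normal \<subseteq> p" "Map.empty \<in> p_normal"
    unfolding p_normal_def by (metis (mono_tags, lifting) someI_ex)+
qed

definition avoid :: "('a \<Rightarrow> 'a option) set \<Rightarrow> ('a \<Rightarrow> 'a option) \<Rightarrow> 'a \<Rightarrow> ('a \<Rightarrow> 'a option) set" where
  "avoid c s j = (SOME q. q \<in> MClub_normal \<and> q \<subseteq> c \<and> s \<in> q \<and> branches r q \<inter> F j = {})"

lemma avoid:
  assumes "c \<in> MClub_normal" and "s \<in> c"
  shows "avoid c s j \<in> MClub_normal" and "avoid c s j \<subseteq> c" and "s \<in> avoid c s j"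
    and "branches r (avoid c s j) \<inter> F j = {}"
proof -
  have "\<exists>q. q \<in> MClub_normal \<and> q \<subseteq> c \<and> s \<in> q \<and> branches r q \<inter> F j = {}"
    using exists_MClub_normal_avoiding[OF assms F] by blast
  then show "avoid c s j \<in> MClub_normal" and "avoid c s j \<subseteq> c" and "s \<in> avoid c s j"
    and "branches r (avoid c s j) \<inter> F j = {}"
    unfolding avoid_def by (metis (mono_tags, lifting) someI_ex)+
qed

definition opred :: "'a \<Rightarrow> 'a" where
  "opred a = (THE g. a = osucc g)"

lemma opred_osucc [simp]: "opred (osucc g) = g"
  unfolding opred_def using osucc_inj by blast

text \<open>In the notation of the proof idea, the state of a kept node t is Some (C t, H t); nodes
  that are not kept have state None.\<close>

definition fusion_step ::
  "('a \<Rightarrow> 'a option) set \<Rightarrow> 'a set \<Rightarrow> ('a \<Rightarrow> 'a option) \<Rightarrow> ('a \<Rightarrow> 'a option)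
    \<Rightarrow> (('a \<Rightarrow> 'a option) set \<times> 'a set) option" where
  "fusion_step c H u t =
    (if t \<notin> c then None
     else if club_splitting r c u then Some (avoid c t (least_notin H), insert (least_notin H) H)
     else Some (c, H))"

definition fusion_rec ::
  "(('a \<Rightarrow> 'a option) \<Rightarrow> (('a \<Rightarrow> 'a option) set \<times> 'a set) option)
    \<Rightarrow> ('a \<Rightarrow> 'a option) \<Rightarrow> (('a \<Rightarrow> 'a option) set \<times> 'a set) option" where
  "fusion_rec f t =
    (if t \<notin> Seqs r then None
     else if len t = ozero then Some (p_normal, {})
     else if \<exists>g. len t = osucc g then
       (case f (trunc t (opred (len t))) of
          None \<Rightarrow> None
        | Some (c, H) \<Rightarrow> fusion_step c H (trunc t (opred (len t))) t)
     else if \<forall>a\<in>underS r (len t). f (trunc t a) \<noteq> None then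
       Some (\<Inter>a\<in>underS r (len t). fst (the (f (trunc t a))),
             \<Union>a\<in>underS r (len t). snd (the (f (trunc t a))))
     else None)"

definition fusion_state :: "('a \<Rightarrow> 'a option) \<Rightarrow> (('a \<Rightarrow> 'a option) set \<times> 'a set) option" where
  "fusion_state = wfrec (inv_image {(a, b). a \<prec> b} len) fusion_rec"

lemma adm_fusion_rec: "adm_wf (inv_image {(a, b). a \<prec> b} len) fusion_rec"
  unfolding adm_wf_def
proof (intro allI impI)
  fix f g :: "('a \<Rightarrow> 'a option) \<Rightarrow> (('a \<Rightarrow> 'a option) set \<times> 'a set) option" and t
  assume H: "\<forall>z. (z, t) \<in> inv_image {(a, b). a \<prec> b} len \<longrightarrow> f z = g z"
  show "fusion_rec f t = fusion_rec g t"
  proof (cases "t \<in> Seqs r")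
    case True
    have eq: "f (trunc t a) = g (trunc t a)" if "a \<prec> len t" for a
      using H that len_trunc[OF True lt_imp_r[OF that]] by simp
    have "opred (len t) \<prec> len t" if "len t = osucc h" for h
      using that lt_osucc by simp
    then show ?thesis
      unfolding fusion_rec_def using eq unfolding underS_conv by (auto cong: SUP_cong)
  qed (simp add: fusion_rec_def)
qed

lemma fusion_state_unfold: "fusion_state t = fusion_rec fusion_state t"
  using wfrec_fixpoint[OF wf_inv_image[OF wf_lt] adm_fusion_rec] unfolding fusion_state_def by metis

lemma fusion_state_empty: "fusion_state Map.empty = Some (p_normal, {})"
  using fusion_state_unfold[of Map.empty] empty_Seqs len_empty unfolding fusion_rec_def by simp

lemma fusion_state_osucc:
  assumes "t \<in> Seqs r" and "len t = osucc g"
  shows "fusion_state t =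
    (case fusion_state (trunc t g) of None \<Rightarrow> None | Some (c, H) \<Rightarrow> fusion_step c H (trunc t g) t)"
proof -
  have "len t \<noteq> ozero" and "\<exists>h. len t = osucc h" and g: "opred (len t) = g"
    using assms(2) osucc_neq_ozero by auto
  then have "fusion_rec fusion_state t = (case fusion_state (trunc t (opred (len t))) of
      None \<Rightarrow> None | Some (c, H) \<Rightarrow> fusion_step c H (trunc t (opred (len t))) t)"
    using assms(1) unfolding fusion_rec_def by simp
  then show ?thesis
    using fusion_state_unfold[of t] unfolding g by simp
qed

lemma fusion_state_limit:
  assumes "t \<in> Seqs r" and "is_limit r (len t)"
  shows "fusion_state t =
    (if \<forall>a\<in>underS r (len t). fusion_state (trunc t a) \<noteq> None then
       Some (\<Inter>a\<in>underS r (len t). fst (the (fusion_state (trunc t a))),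
             \<Union>a\<in>underS r (len t). snd (the (fusion_state (trunc t a))))
     else None)"
  using fusion_state_unfold[of t] assms limit_neq_ozero limit_neq_osucc unfolding fusion_rec_def
  by (simp del: Bex_def)

definition fusion_inv :: "('a \<Rightarrow> 'a option) \<Rightarrow> ('a \<Rightarrow> 'a option) set \<Rightarrow> 'a set \<Rightarrow> bool" where
  "fusion_inv t c H \<longleftrightarrow> c \<in> MClub_normal \<and> t \<in> c \<and> c \<subseteq> p_normal \<and> H \<subseteq> underS r (len t) \<and>
     (\<forall>i\<in>H. \<forall>j. j \<prec> i \<longrightarrow> j \<in> H) \<and>
     (\<forall>a. (a, len t) \<in> r \<longrightarrow>
        (\<exists>c' H'. fusion_state (trunc t a) = Some (c', H') \<and> c \<subseteq> c' \<and> H' \<subseteq> H))"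

lemma fusion_inv_empty: "fusion_inv Map.empty p_normal {}"
proof -
  have "trunc Map.empty a = Map.empty" if "(a, ozero) \<in> r" for a
    using r_ozero_imp_eq[OF that] trunc_len[OF empty_Seqs] len_empty by simp
  then show ?thesis
    using p_normal fusion_state_empty unfolding fusion_inv_def len_empty by auto
qed

lemma fusion_inv_osucc:
  assumes t: "t \<in> Seqs r" and l: "len t = osucc g"
    and IH: "fusion_state (trunc t g) = Some (c0, H0)" "fusion_inv (trunc t g) c0 H0"
    and S: "fusion_state t = Some (c, H)"
  shows "fusion_inv t c H"
proof -
  define u where "u = trunc t g"
  have lu: "len u = g"
    unfolding u_def using len_trunc t l lt_osucc lt_imp_r by simp
  have step: "fusion_step c0 H0 u t = Some (c, H)"
    using S fusion_state_osucc[OF t l] IH(1) unfolding u_def by simp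
  have I0: "c0 \<in> MClub_normal" "c0 \<subseteq> p_normal" "H0 \<subseteq> underS r g" "\<forall>i\<in>H0. \<forall>j. j \<prec> i \<longrightarrow> j \<in> H0"
    using IH(2) lu unfolding fusion_inv_def u_def by auto
  have tc0: "t \<in> c0"
    using step unfolding fusion_step_def by (auto split: if_splits)
  have cases: "(c = avoid c0 t (least_notin H0) \<and> H = insert (least_notin H0) H0) \<or> (c = c0 \<and> H = H0)"
    using step unfolding fusion_step_def by (auto split: if_splits)
  have cc0: "c \<subseteq> c0" and "c \<in> MClub_normal" and "t \<in> c" and "H0 \<subseteq> H"
    using cases avoid[OF I0(1) tc0] I0(1) tc0 by auto
  moreover have "H \<subseteq> underS r (len t)" and "\<forall>i\<in>H. \<forall>j. j \<prec> i \<longrightarrow> j \<in> H"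
    using cases insert_least_notin[OF I0(3,4)] I0(3,4) l underS_osucc by auto
  moreover have "\<exists>c' H'. fusion_state (trunc t a) = Some (c', H') \<and> c \<subseteq> c' \<and> H' \<subseteq> H"
    if a: "(a, len t) \<in> r" for a
  proof (cases "a = len t")
    case True
    then show ?thesis
      using trunc_len[OF t] S by auto
  next
    case False
    then have "a \<prec> osucc g"
      using a l unfolding lt_def by simp
    then have "(a, g) \<in> r"
      using lt_osucc_iff by blast
    then show ?thesis
      using IH(2) lu cc0 \<open>H0 \<subseteq> H\<close> trunc_trunc unfolding fusion_inv_def u_def by fastforce
  qed
  ultimately show ?thesis
    using I0(2) unfolding fusion_inv_def by blast
qed

lemma fusion_inv_trunc:
  "fusion_inv u c H \<Longrightarrow> (a, len u) \<in> r \<Longrightarrow> fusion_state (trunc u a) = Some (c', H') \<Longrightarrow>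
    c \<subseteq> c' \<and> H' \<subseteq> H"
  unfolding fusion_inv_def by fastforce

lemma fusion_inv_limit:
  assumes t: "t \<in> Seqs r" and l: "is_limit r (len t)"
    and IH: "\<And>a. a \<prec> len t \<Longrightarrow>
      fusion_state (trunc t a) = Some (cs a, Hs a) \<and> fusion_inv (trunc t a) (cs a) (Hs a)"
    and S: "fusion_state t = Some (c, H)"
    and c: "c = (\<Inter>a\<in>underS r (len t). cs a)" and H: "H = (\<Union>a\<in>underS r (len t). Hs a)"
  shows "fusion_inv t c H"
proof -
  have mono: "cs b \<subseteq> cs a \<and> Hs a \<subseteq> Hs b" if ab: "(a, b) \<in> r" and b: "b \<prec> len t" for a b
    using fusion_inv_trunc[of "trunc t b" "cs b" "Hs b" a] IH[OF b] IH[OF r_lt_trans[OF ab b]]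
      len_trunc[OF t lt_imp_r[OF b]] trunc_trunc[OF ab] ab by simp
  have ne: "underS r (len t) \<noteq> {}"
    using l unfolding is_limit_def underS_conv by auto
  have N: "cs a \<in> MClub_normal" "trunc t a \<in> cs a" "cs a \<subseteq> p_normal" "Hs a \<subseteq> underS r a"
    "\<forall>i\<in>Hs a. \<forall>j. j \<prec> i \<longrightarrow> j \<in> Hs a" if "a \<prec> len t" for a
    using IH[OF that] len_trunc[OF t lt_imp_r[OF that]] unfolding fusion_inv_def by auto
  have "c \<in> MClub_normal"
    unfolding c
    by (rule MClub_normal_decreasing_Inter[OF ne card_underS_less]) (use N(1) mono in \<open>auto simp: underS_conv\<close>)
  moreover have "t \<in> cs a" if "a \<prec> len t" for a
    by (rule limit_mem_decreasing[OF t l, where P = cs]) (use N(1,2) MClub_normalD mono that in auto)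
  then have "t \<in> c"
    unfolding c underS_conv by blast
  moreover have "c \<subseteq> p_normal"
    using ne N(3) unfolding c underS_conv by blast
  moreover have "H \<subseteq> underS r (len t)"
    using N(4) lt_trans unfolding H underS_conv by blast
  moreover have "\<forall>i\<in>H. \<forall>j. j \<prec> i \<longrightarrow> j \<in> H"
    using N(5) unfolding H underS_conv by blast
  moreover have "\<exists>c' H'. fusion_state (trunc t a) = Some (c', H') \<and> c \<subseteq> c' \<and> H' \<subseteq> H"
    if a: "(a, len t) \<in> r" for a
  proof (cases "a = len t")
    case True
    then show ?thesis
      using trunc_len[OF t] S by auto
  next
    case False
    then have "a \<prec> len t"
      using a unfolding lt_def by blast
    then show ?thesis
      using IH unfolding c H underS_conv by blast
  qed
  ultimately show ?thesis
    unfolding fusion_inv_def by blast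
qed

lemma fusion_inv: "t \<in> Seqs r \<Longrightarrow> fusion_state t = Some (c, H) \<Longrightarrow> fusion_inv t c H"
proof (induction "len t" arbitrary: t c H rule: lt_induct)
  case less: (1 t)
  have IH: "fusion_inv (trunc t a) c' H'"
    if "a \<prec> len t" and "fusion_state (trunc t a) = Some (c', H')" for a c' H'
    using less.hyps[of "trunc t a"] that trunc_Seqs[OF less.prems(1)] len_trunc[OF less.prems(1)]
      lt_imp_r by fastforce
  show ?case
  proof (cases "len t" rule: ordinal_cases)
    case zero
    then show ?thesis
      using len_ozero_imp_empty less.prems fusion_state_empty fusion_inv_empty by auto
  next
    case (succ g)
    then obtain c0 H0 where "fusion_state (trunc t g) = Some (c0, H0)"
      using less.prems fusion_state_osucc[of t g] by (auto split: option.splits)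
    then show ?thesis
      using fusion_inv_osucc[OF less.prems(1) succ] IH succ lt_osucc less.prems(2) by simp
  next
    case limit
    define cs where "cs a = fst (the (fusion_state (trunc t a)))" for a
    define Hs where "Hs a = snd (the (fusion_state (trunc t a)))" for a
    have "fusion_state (trunc t a) = Some (cs a, Hs a)" if "a \<prec> len t" for a
      using less.prems fusion_state_limit[OF less.prems(1) limit] that
      unfolding cs_def Hs_def underS_conv by (auto split: if_splits)
    moreover have "c = (\<Inter>a\<in>underS r (len t). cs a)" and "H = (\<Union>a\<in>underS r (len t). Hs a)"
      using less.prems fusion_state_limit[OF less.prems(1) limit]
      unfolding cs_def Hs_def by (auto split: if_splits)
    ultimately show ?thesis
      using fusion_inv_limit[OF less.prems(1) limit _ less.prems(2), of cs Hs] IH by blast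
  qed
qed

definition fusion_tree :: "('a \<Rightarrow> 'a option) set" where
  "fusion_tree = {t \<in> Seqs r. fusion_state t \<noteq> None}"

definition cond :: "('a \<Rightarrow> 'a option) \<Rightarrow> ('a \<Rightarrow> 'a option) set" where
  "cond t = fst (the (fusion_state t))"

definition handled :: "('a \<Rightarrow> 'a option) \<Rightarrow> 'a set" where
  "handled t = snd (the (fusion_state t))"

lemma fusion_state_fusion_tree: "t \<in> fusion_tree \<Longrightarrow> fusion_state t = Some (cond t, handled t)"
  unfolding fusion_tree_def cond_def handled_def by auto

lemma fusion_tree_Seqs: "t \<in> fusion_tree \<Longrightarrow> t \<in> Seqs r"
  unfolding fusion_tree_def by blast

lemma fusion_tree_inv:
  assumes "t \<in> fusion_tree"
  shows "cond t \<in> MClub_normal" and "t \<in> cond t" and "cond t \<subseteq> p_normal"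
    and "handled t \<subseteq> underS r (len t)" and "i \<in> handled t \<Longrightarrow> j \<prec> i \<Longrightarrow> j \<in> handled t"
  using fusion_inv[OF fusion_tree_Seqs fusion_state_fusion_tree, OF assms assms]
  unfolding fusion_inv_def by blast+

lemma fusion_tree_trunc:
  assumes t: "t \<in> fusion_tree" and a: "(a, len t) \<in> r"
  shows "trunc t a \<in> fusion_tree" and "cond t \<subseteq> cond (trunc t a)" and "handled (trunc t a) \<subseteq> handled t"
proof -
  obtain c' H' where c': "fusion_state (trunc t a) = Some (c', H')" "cond t \<subseteq> c'" "H' \<subseteq> handled t"
    using fusion_inv[OF fusion_tree_Seqs fusion_state_fusion_tree, OF t t] a
    unfolding fusion_inv_def by blast
  then show "trunc t a \<in> fusion_tree" and "cond t \<subseteq> cond (trunc t a)"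
    and "handled (trunc t a) \<subseteq> handled t"
    using trunc_Seqs[OF fusion_tree_Seqs[OF t] a] unfolding fusion_tree_def cond_def handled_def by auto
qed

lemma extend_fusion_tree:
  assumes u: "u \<in> fusion_tree"
  shows "extend u b \<in> fusion_tree \<longleftrightarrow> extend u b \<in> cond u"
    and "extend u b \<in> fusion_tree \<Longrightarrow> club_splitting r (cond u) u \<Longrightarrow>
      cond (extend u b) = avoid (cond u) (extend u b) (least_notin (handled u)) \<and>
      handled (extend u b) = insert (least_notin (handled u)) (handled u)"
    and "extend u b \<in> fusion_tree \<Longrightarrow> \<not> club_splitting r (cond u) u \<Longrightarrow>
      cond (extend u b) = cond u \<and> handled (extend u b) = handled u"
proof -
  have uS: "u \<in> Seqs r"
    using fusion_tree_Seqs[OF u] .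
  have "fusion_state (extend u b) = fusion_step (cond u) (handled u) u (extend u b)"
    using fusion_state_osucc[OF extend_Seqs[OF uS] len_extend[OF uS]] trunc_extend[OF uS]
      fusion_state_fusion_tree[OF u] by simp
  then show "extend u b \<in> fusion_tree \<longleftrightarrow> extend u b \<in> cond u"
    and "extend u b \<in> fusion_tree \<Longrightarrow> club_splitting r (cond u) u \<Longrightarrow>
      cond (extend u b) = avoid (cond u) (extend u b) (least_notin (handled u)) \<and>
      handled (extend u b) = insert (least_notin (handled u)) (handled u)"
    and "extend u b \<in> fusion_tree \<Longrightarrow> \<not> club_splitting r (cond u) u \<Longrightarrow>
      cond (extend u b) = cond u \<and> handled (extend u b) = handled u"
    using extend_Seqs[OF uS] unfolding fusion_tree_def fusion_step_def cond_def handled_def by auto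
qed

lemma limit_fusion_tree:
  assumes t: "t \<in> Seqs r" and l: "is_limit r (len t)"
  shows "t \<in> fusion_tree \<longleftrightarrow> (\<forall>a. a \<prec> len t \<longrightarrow> trunc t a \<in> fusion_tree)"
    and "t \<in> fusion_tree \<Longrightarrow>
      cond t = (\<Inter>a\<in>underS r (len t). cond (trunc t a)) \<and>
      handled t = (\<Union>a\<in>underS r (len t). handled (trunc t a))"
proof -
  have all: "(\<forall>a\<in>underS r (len t). fusion_state (trunc t a) \<noteq> None)
      \<longleftrightarrow> (\<forall>a. a \<prec> len t \<longrightarrow> trunc t a \<in> fusion_tree)"
    using trunc_Seqs[OF t] lt_imp_r unfolding fusion_tree_def underS_conv by auto
  then show "t \<in> fusion_tree \<longleftrightarrow> (\<forall>a. a \<prec> len t \<longrightarrow> trunc t a \<in> fusion_tree)"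
    using fusion_state_limit[OF t l] t unfolding fusion_tree_def by simp
  then show "t \<in> fusion_tree \<Longrightarrow>
      cond t = (\<Inter>a\<in>underS r (len t). cond (trunc t a)) \<and>
      handled t = (\<Union>a\<in>underS r (len t). handled (trunc t a))"
    using fusion_state_limit[OF t l] all unfolding cond_def handled_def by simp
qed

lemma succ_set_fusion_tree: "u \<in> fusion_tree \<Longrightarrow> succ_set r u fusion_tree = succ_set r u (cond u)"
  using extend_fusion_tree(1) succ_set_conv fusion_tree_Seqs by auto

lemma tree_fusion_tree: "is_tree r fusion_tree"
  unfolding is_tree_def
proof (intro conjI ballI impI)
  show "fusion_tree \<noteq> {}"
    using fusion_state_empty empty_Seqs unfolding fusion_tree_def by auto
  show "fusion_tree \<subseteq> Seqs r"
    using fusion_tree_Seqs by blast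
  fix t v
  assume t: "t \<in> fusion_tree" and v: "v \<in> Seqs r" and "v \<subseteq>\<^sub>m t"
  then have "(len v, len t) \<in> r" and "v = trunc t (len v)"
    using map_le_Seqs_iff[OF v fusion_tree_Seqs[OF t]] by blast+
  then show "v \<in> fusion_tree"
    using fusion_tree_trunc(1)[OF t] by metis
qed

lemma pruned_fusion_tree: "pruned r fusion_tree"
proof (rule prunedI[OF tree_fusion_tree], intro ballI)
  fix u
  assume u: "u \<in> fusion_tree"
  have M: "cond u \<in> MClub r"
    using MClub_normalD fusion_tree_inv(1)[OF u] .
  obtain b where "extend u b \<in> cond u"
    using tree_extend_exists[OF MClub_tree[OF M] MClub_pruned[OF M] fusion_tree_inv(2)[OF u]]
    by blast
  then show "\<exists>b. extend u b \<in> fusion_tree"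
    using extend_fusion_tree(1)[OF u] by blast
qed

lemma lt_kappa_closed_fusion_tree: "lt_kappa_closed r fusion_tree"
  unfolding lt_kappa_closed_def
proof (intro allI impI)
  fix s d
  assume H: "dom s = underS r d \<and> is_limit r d \<and> (\<forall>a. a \<prec> d \<longrightarrow> s |` underS r a \<in> fusion_tree)"
  then have "s \<in> Seqs r" and "len s = d"
    using SeqsI len_eqI by blast+
  then show "s \<in> fusion_tree"
    using limit_fusion_tree(1) H unfolding trunc_def by auto
qed

lemma fusion_tree_subset: "fusion_tree \<subseteq> p"
  using fusion_tree_inv(2,3) p_normal(2) by blast

subsection \<open>Branches of the fusion tree\<close>

context
  fixes x
  assumes x: "x \<in> branches r fusion_tree"
begin

definition cond_along :: "'a \<Rightarrow> ('a \<Rightarrow> 'a option) set" where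
  "cond_along a = cond (restr r x a)"

definition handled_along :: "'a \<Rightarrow> 'a set" where
  "handled_along a = handled (restr r x a)"

definition splitting_levels :: "'a set" where
  "splitting_levels = {a. club_splitting r fusion_tree (restr r x a)}"

lemma restr_fusion_tree: "restr r x a \<in> fusion_tree"
  using branches_restr[OF x] .

lemma mem_splitting_levels_iff:
  "a \<in> splitting_levels \<longleftrightarrow> club_splitting r (cond_along a) (restr r x a)"
  unfolding splitting_levels_def cond_along_def club_splitting_def
  using succ_set_fusion_tree[OF restr_fusion_tree] by simp

lemma cond_along_antimono: "(a, b) \<in> r \<Longrightarrow> cond_along b \<subseteq> cond_along a"
  and handled_along_mono: "(a, b) \<in> r \<Longrightarrow> handled_along a \<subseteq> handled_along b"
  unfolding cond_along_def handled_along_def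
  using fusion_tree_trunc[OF restr_fusion_tree, of a b] len_restr trunc_restr by simp_all

lemma cond_along_MClub_normal: "cond_along a \<in> MClub_normal"
  unfolding cond_along_def using fusion_tree_inv(1)[OF restr_fusion_tree] .

lemma cond_along_MClub: "cond_along a \<in> MClub r"
  using MClub_normalD[OF cond_along_MClub_normal] .

lemma branch_cond_along: "x \<in> branches r (cond_along a)"
  unfolding branches_def mem_Collect_eq
proof
  fix b
  show "restr r x b \<in> cond_along a"
  proof (cases "(a, b) \<in> r")
    case True
    then show ?thesis
      using cond_along_antimono fusion_tree_inv(2)[OF restr_fusion_tree]
      unfolding cond_along_def by blast
  next
    case False
    then have "restr r x b \<subseteq>\<^sub>m restr r x a"
      using restr_map_le r_total by blast
    then show ?thesis
      using tree_map_le[OF MClub_tree[OF cond_along_MClub] _ restr_Seqs]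
        fusion_tree_inv(2)[OF restr_fusion_tree] unfolding cond_along_def by blast
  qed
qed

lemma along_osucc:
  "cond_along (osucc a) = (if a \<in> splitting_levels
      then avoid (cond_along a) (restr r x (osucc a)) (least_notin (handled_along a)) else cond_along a)"
  "handled_along (osucc a) = (if a \<in> splitting_levels
      then insert (least_notin (handled_along a)) (handled_along a) else handled_along a)"
  using extend_fusion_tree(2,3)[OF restr_fusion_tree[of a], of "x a"] restr_fusion_tree[of "osucc a"]
    mem_splitting_levels_iff[of a]
  unfolding cond_along_def handled_along_def restr_osucc by simp_all

lemma along_limit:
  assumes "is_limit r a"
  shows "cond_along a = (\<Inter>b\<in>underS r a. cond_along b)"
    and "handled_along a = (\<Union>b\<in>underS r a. handled_along b)"
proof -
  have "trunc (restr r x a) b = restr r x b" if "b \<in> underS r a" for b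
    using trunc_restr that lt_imp_r unfolding underS_conv by blast
  then show "cond_along a = (\<Inter>b\<in>underS r a. cond_along b)"
    and "handled_along a = (\<Union>b\<in>underS r a. handled_along b)"
    using limit_fusion_tree(2)[OF restr_Seqs, of x a] assms restr_fusion_tree
    unfolding cond_along_def handled_along_def len_restr by auto
qed

lemma handled_along_ozero: "handled_along ozero = {}"
  unfolding handled_along_def handled_def restr_ozero using fusion_state_empty by simp

lemma cond_along_constant:
  assumes gap: "\<forall>g. (a1, g) \<in> r \<longrightarrow> g \<notin> splitting_levels"
  shows "(a1, a) \<in> r \<Longrightarrow> cond_along a = cond_along a1"
proof (induction a rule: lt_induct)
  case (1 a)
  show ?case
  proof (cases a rule: ordinal_cases)
    case zero
    then have "a = a1"
      using 1(2) r_ozero_imp_eq by blast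
    then show ?thesis
      by simp
  next
    case (succ g)
    show ?thesis
    proof (cases "a = a1")
      case False
      then have "(a1, g) \<in> r"
        using 1(2) succ lt_osucc_iff unfolding lt_def by blast
      then show ?thesis
        using 1(1)[of g] gap along_osucc(1)[of g] succ lt_osucc by simp
    qed simp
  next
    case limit
    show ?thesis
    proof (cases "a = a1")
      case False
      then have "a1 \<prec> a"
        using 1(2) unfolding lt_def by blast
      moreover have "cond_along a1 \<subseteq> cond_along b" if "b \<prec> a" for b
        using 1(1)[OF that] cond_along_antimono r_total by (cases "(a1, b) \<in> r") auto
      ultimately show ?thesis
        unfolding along_limit(1)[OF limit] underS_conv by blast
    qed simp
  qed
qed

lemma splitting_levels_unbounded: "\<exists>a\<in>splitting_levels. a0 \<prec> a"
proof (rule ccontr)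
  assume none: "\<not> ?thesis"
  define a1 where "a1 = osucc a0"
  have gap: "\<forall>g. (a1, g) \<in> r \<longrightarrow> g \<notin> splitting_levels"
    using none lt_osucc r_lt_trans not_lt_iff unfolding a1_def by (metis lt_r_trans)
  obtain a where a: "club_splitting r (cond_along a1) (restr r x a)" "a1 \<prec> a"
    using club_exists_greater[OF MClub_branch_club[OF cond_along_MClub branch_cond_along]] by blast
  then have "a \<in> splitting_levels"
    using cond_along_constant[OF gap lt_imp_r[OF a(2)]] mem_splitting_levels_iff by simp
  then show False
    using gap a(2) lt_imp_r by blast
qed

lemma splitting_in_cond_along:
  assumes "(b, c) \<in> r" and "c \<in> splitting_levels"
  shows "club_splitting r (cond_along b) (restr r x c)"
proof -
  have "succ_set r (restr r x c) (cond_along c) \<subseteq> succ_set r (restr r x c) (cond_along b)"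
    using succ_set_mono[OF restr_Seqs cond_along_antimono[OF assms(1)]] .
  then show ?thesis
    using normal_club_splittingI[of "cond_along b"] assms(2) cond_along_MClub_normal
      branches_restr[OF branch_cond_along] mem_splitting_levels_iff
    unfolding MClub_normal_def club_splitting_def by blast
qed

lemma splitting_levels_closed: "closed_set r splitting_levels"
  unfolding closed_set_def
proof (intro allI impI)
  fix a
  assume H: "(\<exists>b. b \<prec> a) \<and> (\<forall>b. b \<prec> a \<longrightarrow> (\<exists>c\<in>splitting_levels. b \<prec> c \<and> c \<prec> a))"
  then have l: "is_limit r a"
    unfolding is_limit_def by blast
  have "a \<in> {a. club_splitting r (cond_along b) (restr r x a)}" if b: "b \<prec> a" for b
  proof -
    have "\<exists>c\<in>{a. club_splitting r (cond_along b) (restr r x a)}. e \<prec> c \<and> c \<prec> a" if e: "e \<prec> a" for e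
    proof -
      obtain m where m: "(e, m) \<in> r" "(b, m) \<in> r" "m \<prec> a"
        using b e r_total by blast
      then obtain c where "c \<in> splitting_levels" "m \<prec> c" "c \<prec> a"
        using H by blast
      then show ?thesis
        using splitting_in_cond_along m r_lt_trans lt_imp_r r_trans by blast
    qed
    then show ?thesis
      using MClub_branch_club[OF cond_along_MClub branch_cond_along] H
      unfolding club_def closed_set_def by blast
  qed
  then have "\<forall>C\<in>(\<lambda>b. succ_set r (restr r x a) (cond_along b)) ` underS r a. club r C"
    unfolding club_splitting_def underS_conv by blast
  then have "club r (\<Inter>b\<in>underS r a. succ_set r (restr r x a) (cond_along b))"
    using club_Inter[OF small_image[OF card_underS_less]] by blast
  then show "a \<in> splitting_levels"
    unfolding mem_splitting_levels_iff club_splitting_def along_limit(1)[OF l]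
      succ_set_Inter[OF restr_Seqs] image_image .
qed

lemma splitting_levels_club: "club r splitting_levels"
  unfolding club_def unbounded_def using splitting_levels_closed splitting_levels_unbounded by blast

text \<open>Each splitting level handles a new index below any index that is never handled, so
  if some index were never handled the club of splitting levels would have size less than
  kappa.\<close>

lemma handled_eventually: "\<exists>a. j \<in> handled_along a"
proof (rule ccontr)
  assume never: "\<not> ?thesis"
  have below_j: "handled_along a \<subseteq> underS r j" for a
    using never fusion_tree_inv(5)[OF restr_fusion_tree] not_lt_iff
    unfolding handled_along_def underS_conv lt_def by blast
  have "a \<notin> handled_along a" for a
    using fusion_tree_inv(4)[OF restr_fusion_tree, of a] len_restr
    unfolding handled_along_def underS_conv by (metis lt_irrefl mem_Collect_eq subsetD)
  then have new: "least_notin (handled_along a) \<notin> handled_along a" for a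
    using least_notin(1) by blast
  define m where "m a = least_notin (handled_along a)" for a
  have m_handled: "m a \<in> handled_along (osucc a)" if "a \<in> splitting_levels" for a
    using along_osucc(2)[of a] that unfolding m_def by simp
  have "inj_on m splitting_levels"
  proof
    fix a a'
    assume a: "a \<in> splitting_levels" and a': "a' \<in> splitting_levels" and eq: "m a = m a'"
    have False if "a \<prec> a'" "a \<in> splitting_levels" "m a = m a'" for a a'
      using m_handled[OF that(2)] handled_along_mono[OF osucc_least[OF that(1)]] new[of a'] that(3)
      unfolding m_def by (metis subsetD)
    then show "a = a'"
      using lt_trichotomy[of a a'] a a' eq by metis
  qed
  moreover have "m ` splitting_levels \<subseteq> underS r j"
    using m_handled below_j by blast
  ultimately have "|splitting_levels| \<le>o |underS r j|"
    using card_of_ordLeq by blast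
  then have "|splitting_levels| <o r"
    using ordLeq_ordLess_trans card_underS_less by blast
  then show False
    using unbounded_not_small splitting_levels_club unfolding club_def by blast
qed

lemma branch_avoids: "x \<notin> F j"
proof -
  obtain a where a: "j \<in> handled_along a" and least: "\<And>b. j \<in> handled_along b \<Longrightarrow> (a, b) \<in> r"
    using handled_eventually exists_least[where P = "\<lambda>b. j \<in> handled_along b"] by blast
  have before: "j \<notin> handled_along b" if "b \<prec> a" for b
    using least that not_lt_iff by blast
  show ?thesis
  proof (cases a rule: ordinal_cases)
    case zero
    then show ?thesis
      using a handled_along_ozero by simp
  next
    case (succ g)
    then have "j \<notin> handled_along g"
      using before lt_osucc by blast
    then have g: "g \<in> splitting_levels" and "j = least_notin (handled_along g)"
      using a along_osucc(2)[of g] succ by (auto split: if_splits)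
    then have "cond_along a = avoid (cond_along g) (restr r x a) j"
      using along_osucc(1)[of g] succ by simp
    then have "branches r (cond_along a) \<inter> F j = {}"
      using avoid(4)[OF cond_along_MClub_normal[of g]] g branch_cond_along succ restr_osucc
        restr_fusion_tree extend_fusion_tree(1) cond_along_def by (metis branches_restr)
    then show ?thesis
      using branch_cond_along by blast
  next
    case limit
    then show ?thesis
      using a before along_limit(2)[OF limit] unfolding underS_conv by blast
  qed
qed

end

lemma fusion_tree_MClub: "fusion_tree \<in> MClub r"
proof (rule MClubI[OF tree_fusion_tree pruned_fusion_tree lt_kappa_closed_fusion_tree], intro ballI)
  fix x
  assume "x \<in> branches r fusion_tree"
  then show "club r {a. club_splitting r fusion_tree (restr r x a)}"
    using splitting_levels_club by (simp add: splitting_levels_def)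
qed

lemma exists_MClub_below_avoiding: "\<exists>q\<in>MClub r. q \<subseteq> p \<and> branches r q \<inter> (\<Union>j. F j) = {}"
  using fusion_tree_MClub fusion_tree_subset branch_avoids by blast

end

lemma nowhere_dense_subset_ideal_I: "nowhere_dense r P \<subseteq> ideal_I r P"
proof
  fix X
  assume "X \<in> nowhere_dense r P"
  then show "X \<in> ideal_I r P"
    unfolding ideal_I_def by (intro CollectI exI[where x = "\<lambda>_. X"]) auto
qed

lemma (in kappa) ideal_I_subset_nowhere_dense: "ideal_I r (MClub r) \<subseteq> nowhere_dense r (MClub r)"
proof
  fix X
  assume "X \<in> ideal_I r (MClub r)"
  then obtain F :: "'a \<Rightarrow> ('a \<Rightarrow> 'a) set"
    where F: "\<And>j. F j \<in> nowhere_dense r (MClub r)" and X: "X \<subseteq> (\<Union>j. F j)"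
    unfolding ideal_I_def by blast
  have "\<exists>q\<in>MClub r. q \<subseteq> p \<and> branches r q \<inter> X = {}" if p: "p \<in> MClub r" for p
  proof -
    interpret fusion r p F
      by (unfold_locales; fact p F)
    obtain q where q: "q \<in> MClub r" "q \<subseteq> p" "branches r q \<inter> (\<Union>j. F j) = {}"
      using exists_MClub_below_avoiding by blast
    then have "branches r q \<inter> X = {}"
      using X by auto
    then show ?thesis
      using q by blast
  qed
  then show "X \<in> nowhere_dense r (MClub r)"
    unfolding nowhere_dense_def by blast
qed

theorem mainTheorem6:
  fixes r :: "'a rel"
  assumes "kappa_assms r"
  shows "nowhere_dense r (MClub r) = ideal_I r (MClub r)"
proof -
  interpret kappa r
    by (rule kappa.intro) (fact assms)
  show ?thesis
    using nowhere_dense_subset_ideal_I ideal_I_subset_nowhere_dense by blast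
qed

end
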